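(* For every $[Q]\in\mathcal{Q}_+/\mathrm{SL}_2(\mathbb{Z})$ we have $\mathbb{M}(W(Q))=\mathbb{M}(Q)$. Conversely, for every primitive word $W\in\{L,R\}^*_{\mathrm{prim}}\setminus\{L,R\}$ there exists $Q\in\mathcal{Q}_+$ such that $\mathbb{M}(W)=\mathbb{M}(Q)$.
   Context: $\mathcal{Q}_+$ is the set of integral binary quadratic forms $Q(x,y)=ax^2+bxy+cy^2$ with discriminant $D=b^2-4ac>0$ not a perfect square, with the action of $\mathrm{SL}_2(\mathbb{Z})$ by $(Q\circ\gamma)(x,y)=Q(\alpha x+\beta y,\gamma x+\delta y)$. Put $w_Q=\frac{-b+\sqrt{D}}{2a}$ and write its regular continued fraction as $w_Q=[a_1,\dots,a_{2k},\overline{c_1,\dots,c_{2\ell}}]$ with even-length pre-period and minimal even period (if the minimal period $(c_1,\dots,c_m)$ has odd length $m$, use the doubled block of length $2m$). $W(Q)=L^{c_1}R^{c_2}\cdots L^{c_{2\ell-1}}R^{c_{2\ell}}$, a primitive word well defined up to cyclic permutation. $\{L,R\}^*_{\mathrm{prim}}$ is the set of finite nonempty primitive words (not a proper power of a shorter word) over $\{L,R\}$. Modular braid of a word: for $W\in\{L,R\}^*_{\mathrm{prim}}$ of length $m\ge2$, with $\mathrm{cyc}$ moving the first letter to the end, let $\mathrm{rank}_j(W)$ ($1\le j\le m$) be the rank of $\mathrm{cyc}^{j-1}(W)$ among the (distinct) cyclic permutations of $W$ in ascending lexicographic order with $L<R$, and $\mathrm{rank}_{m+1}(W)=\mathrm{rank}_1(W)$.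 $\mathbb{M}(W)$ is the $m$-strand braid joining the $\mathrm{rank}_j(W)$-th top point to the $\mathrm{rank}_{j+1}(W)$-th bottom point by straight segments ($1\le j\le m$), the strand from a top point whose cyclic permutation begins with $L$ passing over one whose cyclic permutation begins with $R$ at each crossing. Modular braid of a form: replacing $L$ by $0$ and $R$ by $1$ in (a cyclic permutation of) $W(Q)$ gives a rational number $x=0.\overline{0^{c_1}1^{c_2}\cdots0^{c_{2\ell-1}}1^{c_{2\ell}}}_{(2)}\in[0,1]$ in binary. Let $\mathrm{Ber}(y)=2y \bmod 1$ on $[0,1]$; the orbit of $x$ under $\mathrm{Ber}$ is periodic with period $n$ equal to the length of $W(Q)$. Place copies of $[0,1]$ on a top and a bottom line, and for each point $y$ of the orbit join $y$ on top to $\mathrm{Ber}(y)$ on the bottom by a straight segment, so that at each crossing the segment starting in $[0,1/2]$ passes over the segment starting in $[1/2,1]$. The resulting $n$-strand positive braid (points ordered by their position in $[0,1]$) is $\mathbb{M}(Q)$; it does not depend on the choice of cyclic permutation. *)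

theory Defs
  imports Complex_Main
begin

datatype letter = L | R

definition letter_code :: "letter \<Rightarrow> nat" where
  "letter_code l = (if l = L then 0 else 1)"

text \<open>Lexicographic order on words with L < R (used on words of equal length).\<close>
definition lex_less :: "letter list \<Rightarrow> letter list \<Rightarrow> bool" where
  "lex_less U V \<longleftrightarrow> (map letter_code U, map letter_code V) \<in> lexord {(a, b). a < b}"

definition primitive_word :: "letter list \<Rightarrow> bool" where
  "primitive_word W \<longleftrightarrow> W \<noteq> [] \<and> \<not> (\<exists>U k. 2 \<le> k \<and> W = concat (replicate k U))"

text \<open>A braid drawn with straight segments is recorded by: the number of strands n,
 the map sending top point i (0-based, in left-to-right order) to the bottom point
 its strand ends at, and, for each pair of crossing strands, whether the strand
 starting at top point i passes over the strand starting at top point j.\<close>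

type_synonym braid_diag = "nat \<times> (nat \<Rightarrow> nat) \<times> (nat \<Rightarrow> nat \<Rightarrow> bool)"

definition strands_cross :: "(nat \<Rightarrow> nat) \<Rightarrow> nat \<Rightarrow> nat \<Rightarrow> bool" where
  "strands_cross \<sigma> i j \<longleftrightarrow> (i < j \<and> \<sigma> j < \<sigma> i) \<or> (j < i \<and> \<sigma> i < \<sigma> j)"

definition mk_diag :: "nat \<Rightarrow> (nat \<Rightarrow> nat) \<Rightarrow> (nat \<Rightarrow> nat \<Rightarrow> bool) \<Rightarrow> braid_diag" where
  "mk_diag n \<sigma> ov =
     (n, (\<lambda>i. if i < n then \<sigma> i else 0),
      (\<lambda>i j. i < n \<and> j < n \<and> strands_cross \<sigma> i j \<and> ov i j))"

definition rots :: "letter list \<Rightarrow> letter list set" where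
  "rots W = {rotate k W | k. k < length W}"

text \<open>0-based rank (rank minus one) of a word among the cyclic permutations of W.\<close>
definition rk :: "letter list \<Rightarrow> letter list \<Rightarrow> nat" where
  "rk W V = card {U \<in> rots W. lex_less U V}"

definition rot_at :: "letter list \<Rightarrow> nat \<Rightarrow> letter list" where
  "rot_at W i = (THE V. V \<in> rots W \<and> rk W V = i)"

text \<open>Strand from top point rank_j joins bottom point rank_{j+1}, where rank_j belongs to
 cyc^(j-1)(W) and rank_{j+1} to cyc^j(W) = cyc(cyc^(j-1)(W)); cyc = rotate 1.\<close>
definition word_braid :: "letter list \<Rightarrow> braid_diag" where
  "word_braid W = mk_diag (length W)
     (\<lambda>i. rk W (rotate 1 (rot_at W i)))
     (\<lambda>i j. hd (rot_at W i) = L \<and> hd (rot_at W j) = R)"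

type_synonym qform = "int \<times> int \<times> int"

definition disc :: "qform \<Rightarrow> int" where
  "disc Q = (case Q of (a, b, c) \<Rightarrow> b^2 - 4*a*c)"

definition Qplus :: "qform set" where
  "Qplus = {Q. disc Q > 0 \<and> \<not> (\<exists>k::int. disc Q = k^2)}"

definition wQ :: "qform \<Rightarrow> real" where
  "wQ Q = (case Q of (a, b, c) \<Rightarrow> (- of_int b + sqrt (of_int (disc Q))) / (2 * of_int a))"

text \<open>Regular continued fraction: complete quotients and partial quotients (0-based,
 so cf_digit w 0 = a_1).\<close>
fun cf_rem :: "real \<Rightarrow> nat \<Rightarrow> real" where
  "cf_rem w 0 = w"
| "cf_rem w (Suc k) = 1 / (cf_rem w k - of_int \<lfloor>cf_rem w k\<rfloor>)"

definition cf_digit :: "real \<Rightarrow> nat \<Rightarrow> int" where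
  "cf_digit w k = \<lfloor>cf_rem w k\<rfloor>"

definition cf_period :: "real \<Rightarrow> nat" where
  "cf_period w = (LEAST p. 0 < p \<and> (\<exists>N. \<forall>k\<ge>N. cf_digit w (k + p) = cf_digit w k))"

definition cf_preperiod :: "real \<Rightarrow> nat" where
  "cf_preperiod w = (LEAST N. \<forall>k\<ge>N. cf_digit w (k + cf_period w) = cf_digit w k)"

definition cf_even_preperiod :: "real \<Rightarrow> nat" where
  "cf_even_preperiod w = (if even (cf_preperiod w) then cf_preperiod w else cf_preperiod w + 1)"

definition cf_even_period :: "real \<Rightarrow> nat" where
  "cf_even_period w = (if even (cf_period w) then cf_period w else 2 * cf_period w)"

text \<open>W(Q) = L^c1 R^c2 ... L^c(2l-1) R^c(2l).\<close>
definition WQ :: "qform \<Rightarrow> letter list" where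
  "WQ Q = (let w = wQ Q in
     concat (map (\<lambda>i. replicate (nat (cf_digit w (cf_even_preperiod w + i)))
                                 (if even i then L else R))
                 [0..<cf_even_period w]))"

definition Ber :: "real \<Rightarrow> real" where
  "Ber y = frac (2 * y)"

definition periodic_binary :: "nat list \<Rightarrow> real" where
  "periodic_binary ds = (\<Sum>k. real (ds ! (k mod length ds)) / 2 ^ (k + 1))"

definition form_braid :: "qform \<Rightarrow> braid_diag" where
  "form_braid Q =
     (let x = periodic_binary (map letter_code (WQ Q));
          Orb = {(Ber ^^ k) x | k. True};
          pos = (\<lambda>y. card {z \<in> Orb. z < y});
          pt = (\<lambda>i. THE y. y \<in> Orb \<and> pos y = i)
      in mk_diag (card Orb)
           (\<lambda>i. pos (Ber (pt i)))
           (\<lambda>i j. pt i \<le> 1/2 \<and> 1/2 \<le> pt j))"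

end

theory Submission
  imports Defs
begin

text \<open>Reading \<open>L\<close> as 0 and \<open>R\<close> as 1, the rotations of a word \<open>W\<close> are the binary
 expansions of the points of the \<open>Ber\<close>-orbit of \<open>x = 0.(W repeated)\<close>, rotating by one letter
 is applying \<open>Ber\<close>, the lexicographic order of rotations is the order of the points in
 \<open>[0, 1]\<close>, and a rotation starts with \<open>L\<close> iff its point lies below \<open>1/2\<close>. So for a primitive
 word with both letters the two braid diagrams coincide.

 \<open>W(Q)\<close> is such a word: by Lagrange's theorem the continued fraction of \<open>w_Q\<close> is eventually
 periodic (the complete quotients \<open>(P + sqrt D) / q\<close> become reduced and then range over a
 finite set), and a proper power of \<open>W(Q)\<close> would give a shorter period. Conversely, a
 rotation \<open>L^c1 R^c2 ... R^c2l\<close> of \<open>W\<close> is \<open>W(Q)\<close> for the form \<open>Q\<close> whose root is the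
 purely periodic continued fraction \<open>[c1, ..., c2l, c1, ...]\<close>, a fixed point of the product
 of the matrices \<open>[[c, 1], [1, 0]]\<close>.\<close>

lemma rots_eq_range:
  assumes "W \<noteq> []"
  shows "rots W = range (\<lambda>k. rotate k W)"
  unfolding rots_def using assms
  by (auto, metis length_greater_0_conv mod_less_divisor rotate_conv_mod)

lemma rots_eq_image: "rots W = (\<lambda>k. rotate k W) ` {..<length W}"
  unfolding rots_def by auto

lemma finite_rots: "finite (rots W)"
  unfolding rots_eq_image by simp

lemma rotate_in_rots: "W \<noteq> [] \<Longrightarrow> rotate k W \<in> rots W"
  by (simp add: rots_eq_range)

lemma rotate_self_imp_power:
  assumes "rotate r W = W" "0 < r" "r < length W"
  shows "\<exists>U k. 2 \<le> k \<and> W = concat (replicate k U)"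
proof -
  have "take r W @ drop r W = drop r W @ take r W"
    using assms by (simp add: rotate_drop_take)
  moreover have "take r W \<noteq> []" "drop r W \<noteq> []"
    using assms by auto
  ultimately obtain k U where "1 < k" "concat (replicate k U) = take r W @ drop r W"
    using comm_append_is_replicate by blast
  then show ?thesis by (intro exI[of _ U] exI[of _ k]) auto
qed

lemma rots_rotate [simp]: "rots (rotate j W) = rots W"
proof (cases "W = []")
  case False
  let ?n = "length W"
  have "rotate k W \<in> range (\<lambda>k. rotate k (rotate j W))" for k
  proof -
    have "j mod ?n < ?n" "j div ?n * ?n + j mod ?n = j"
      using False by simp_all
    then have "k + (?n - j mod ?n) + j = k + ?n + j div ?n * ?n"
      by linarith
    then have "(k + (?n - j mod ?n) + j) mod ?n = k mod ?n"
      by (simp only:) simp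
    then have "rotate (k + (?n - j mod ?n)) (rotate j W) = rotate k W"
      by (metis rotate_conv_mod rotate_rotate)
    then show ?thesis
      by (metis rangeI)
  qed
  then have "range (\<lambda>k. rotate k (rotate j W)) = range (\<lambda>k. rotate k W)"
    by (auto simp: rotate_rotate)
  then show ?thesis using False by (simp add: rots_eq_range)
qed simp

lemma primitive_word_card_rots:
  assumes "primitive_word W"
  shows "card (rots W) = length W"
proof (rule ccontr)
  let ?n = "length W"
  assume "card (rots W) \<noteq> ?n"
  then have "\<not> inj_on (\<lambda>k. rotate k W) {..<?n}"
    unfolding rots_eq_image using card_image by fastforce
  then obtain i j where ij: "i < j" "j < ?n" "rotate i W = rotate j W"
    unfolding inj_on_def by (metis lessThan_iff linorder_neqE_nat)
  have "rotate (j - i) W = rotate (?n - i) (rotate j W)"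
  proof -
    have "?n - i + j = (j - i) + ?n"
      using ij by simp
    then have "rotate (?n - i + j) W = rotate (j - i) W"
      by (metis mod_add_self2 rotate_conv_mod)
    then show ?thesis by (simp add: rotate_rotate)
  qed
  also have "\<dots> = rotate (?n - i + i) W"
    using ij(3) by (simp only: rotate_rotate[symmetric])
  also have "\<dots> = W"
    using ij by simp
  finally have "rotate (j - i) W = W" .
  moreover have "0 < j - i" "j - i < ?n"
    using ij by simp_all
  ultimately show False
    using rotate_self_imp_power assms unfolding primitive_word_def by blast
qed

lemma concat_replicate_Suc_right: "concat (replicate (Suc k) U) = concat (replicate k U) @ U"
  by (induction k) auto

lemma power_card_rots_less:
  assumes "2 \<le> k" "U \<noteq> []"
  shows "card (rots (concat (replicate k U))) < length (concat (replicate k U))"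
proof -
  let ?W = "concat (replicate k U)"
  obtain k' where k': "k = Suc k'"
    using assms(1) by (cases k) auto
  have W: "?W = U @ concat (replicate k' U)" "?W = concat (replicate k' U) @ U"
    unfolding k' by (simp, rule concat_replicate_Suc_right)
  have "rotate (length U) ?W = concat (replicate k' U) @ U"
    unfolding W(1) by (rule rotate_append)
  also have "\<dots> = rotate 0 ?W"
    using W(2) by simp
  finally have rot: "rotate (length U) ?W = rotate 0 ?W" .
  have "length U < length ?W"
    using assms k' by (cases k') (auto simp: length_concat sum_list_replicate)
  have "\<not> inj_on (\<lambda>j. rotate j ?W) {..<length ?W}"
  proof
    assume "inj_on (\<lambda>j. rotate j ?W) {..<length ?W}"
    then have "length U = 0"
      using rot \<open>length U < length ?W\<close> assms(1)
      by (intro inj_onD[of "\<lambda>j. rotate j ?W" "{..<length ?W}" "length U" 0]) auto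
    then show False
      using assms(2) by simp
  qed
  then have "card ((\<lambda>j. rotate j ?W) ` {..<length ?W}) \<noteq> card {..<length ?W}"
    using eq_card_imp_inj_on by blast
  moreover have "card ((\<lambda>j. rotate j ?W) ` {..<length ?W}) \<le> card {..<length ?W}"
    by (rule card_image_le) simp
  ultimately show ?thesis
    unfolding rots_eq_image by simp
qed

lemma primitive_word_iff_card_rots: "primitive_word W \<longleftrightarrow> W \<noteq> [] \<and> card (rots W) = length W"
proof
  assume W: "W \<noteq> [] \<and> card (rots W) = length W"
  have False if "W = concat (replicate k U)" "2 \<le> k" for U k
  proof -
    have "U \<noteq> []"
      using that W by auto
    then show False
      using power_card_rots_less[OF that(2) \<open>U \<noteq> []\<close>] that(1) W by simp
  qed
  then show "primitive_word W"
    unfolding primitive_word_def using W by blast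
qed (simp add: primitive_word_card_rots primitive_word_def)

lemma primitive_word_rotate: "primitive_word (rotate k W) \<longleftrightarrow> primitive_word W"
  unfolding primitive_word_iff_card_rots by simp

lemma primitive_word_letters:
  assumes "primitive_word W" "2 \<le> length W"
  shows "L \<in> set W" "R \<in> set W"
proof -
  have False if "\<forall>y\<in>set W. y = x" for x
  proof -
    have "W = concat (replicate (length W) [x])"
      using that by (simp add: replicate_length_same)
    then show False using assms unfolding primitive_word_def by blast
  qed
  then show "L \<in> set W" "R \<in> set W" by (metis letter.exhaust)+
qed

lemma primitive_word_length_ge_2:
  assumes "primitive_word W" "W \<noteq> [L]" "W \<noteq> [R]"
  shows "2 \<le> length W"
proof -
  have "length W \<noteq> 0"
    using assms(1) unfolding primitive_word_def by simp
  moreover have "length W \<noteq> 1"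
  proof
    assume "length W = 1"
    then obtain x where "W = [x]"
      by (cases W) auto
    then show False
      using assms(2,3) by (cases x) auto
  qed
  ultimately show ?thesis
    by linarith
qed

section \<open>Words as binary numbers\<close>

definition binary_val :: "(nat \<Rightarrow> nat) \<Rightarrow> real" where
  "binary_val s = (\<Sum>k. real (s k) / 2 ^ (k + 1))"

lemma binary_term_le:
  assumes "s k \<le> 1"
  shows "real (s k) / 2 ^ (k + 1) \<le> (1/2) ^ Suc k"
  using assms by (simp add: divide_right_mono power_divide)

lemma summable_binary:
  assumes "\<And>k. s k \<le> 1"
  shows "summable (\<lambda>k. real (s k) / 2 ^ (k + 1))"
proof (rule summable_comparison_test)
  show "summable (\<lambda>k. (1/2::real) ^ Suc k)"
    using power_half_series by (rule sums_summable)
  show "\<exists>N. \<forall>k\<ge>N. norm (real (s k) / 2 ^ (k + 1)) \<le> (1/2) ^ Suc k"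
    using binary_term_le assms by auto
qed

lemma binary_val_Suc:
  assumes "\<And>k. s k \<le> 1"
  shows "binary_val s = (real (s 0) + binary_val (\<lambda>k. s (Suc k))) / 2"
proof -
  have "binary_val s - real (s 0) / 2 = (\<Sum>k. real (s (Suc k)) / 2 ^ (Suc k + 1))"
    using suminf_split_head[OF summable_binary, of s] assms unfolding binary_val_def by simp
  also have "\<dots> = (\<Sum>k. real (s (Suc k)) / 2 ^ (k + 1) / 2)"
    by (simp add: field_simps)
  also have "\<dots> = binary_val (\<lambda>k. s (Suc k)) / 2"
    unfolding binary_val_def using assms by (intro suminf_divide summable_binary) auto
  finally show ?thesis by simp
qed

lemma binary_val_nonneg: "(\<And>k. s k \<le> 1) \<Longrightarrow> 0 \<le> binary_val s"
  unfolding binary_val_def by (intro suminf_nonneg summable_binary) auto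

lemma binary_val_pos: "(\<And>k. s k \<le> 1) \<Longrightarrow> s i = 1 \<Longrightarrow> 0 < binary_val s"
  unfolding binary_val_def by (intro suminf_pos2[where i = i] summable_binary) auto

lemma binary_val_less_1:
  assumes "\<And>k. s k \<le> 1" "s i = 0"
  shows "binary_val s < 1"
proof -
  let ?gap = "\<lambda>k. (1/2::real) ^ Suc k - real (s k) / 2 ^ (k + 1)"
  have geom: "(\<lambda>k. (1/2::real) ^ Suc k) sums 1"
    using power_half_series .
  have "0 < suminf ?gap"
  proof (rule suminf_pos2[where i = i])
    show "summable ?gap"
      using sums_summable[OF geom] summable_binary[OF assms(1)] by (rule summable_diff)
    show "0 \<le> ?gap k" for k
      using binary_term_le[of s k] assms(1) by simp
    show "0 < ?gap i"
      using assms(2) by simp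
  qed
  also have "suminf ?gap = 1 - binary_val s"
    using suminf_diff[OF sums_summable[OF geom] summable_binary[OF assms(1)]] geom
    unfolding binary_val_def by (simp add: sums_iff)
  finally show ?thesis by simp
qed

text \<open>The digit 0 at position j rules out the expansion 0111... = 1000..., so the
 comparison is strict.\<close>
lemma binary_val_less:
  assumes "\<And>k. s k \<le> 1" "\<And>k. t k \<le> 1"
    and "\<forall>k<m. s k = t k" "s m = 0" "t m = 1" "m < j" "s j = 0"
  shows "binary_val s < binary_val t"
  using assms
proof (induction m arbitrary: s t j)
  case 0
  obtain j' where j: "j = Suc j'"
    using 0 by (cases j) auto
  have "binary_val (\<lambda>k. s (Suc k)) < 1"
    using 0 j by (intro binary_val_less_1[where i = j']) auto
  moreover have "0 \<le> binary_val (\<lambda>k. t (Suc k))"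
    using 0 by (intro binary_val_nonneg)
  ultimately show ?case
    using 0 binary_val_Suc[of s] binary_val_Suc[of t] by simp
next
  case (Suc m)
  obtain j' where j: "j = Suc j'"
    using Suc by (cases j) auto
  have "binary_val (\<lambda>k. s (Suc k)) < binary_val (\<lambda>k. t (Suc k))"
    using Suc.prems j by (intro Suc.IH[where j = j']) auto
  moreover have "s 0 = t 0"
    using Suc by auto
  ultimately show ?case
    using Suc binary_val_Suc[of s] binary_val_Suc[of t] by simp
qed

definition word_digits :: "letter list \<Rightarrow> nat \<Rightarrow> nat" where
  "word_digits W k = letter_code (W ! (k mod length W))"

definition word_val :: "letter list \<Rightarrow> real" where
  "word_val W = binary_val (word_digits W)"

lemma word_digits_le_1: "word_digits W k \<le> 1"
  unfolding word_digits_def letter_code_def by simp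

lemma periodic_binary_eq_word_val:
  "W \<noteq> [] \<Longrightarrow> periodic_binary (map letter_code W) = word_val W"
  unfolding periodic_binary_def word_val_def binary_val_def word_digits_def by simp

lemma word_digits_Suc:
  assumes "W \<noteq> []"
  shows "word_digits W (Suc k) = word_digits (rotate 1 W) k"
proof -
  have "rotate 1 W ! (k mod length W) = W ! ((1 + k mod length W) mod length W)"
    using assms by (intro nth_rotate) simp
  then show ?thesis
    unfolding word_digits_def by (simp add: mod_Suc_eq)
qed

lemma word_val_rotate1:
  assumes "W \<noteq> []"
  shows "word_val W = (real (letter_code (hd W)) + word_val (rotate 1 W)) / 2"
proof -
  have "word_val W = (real (word_digits W 0) + binary_val (\<lambda>k. word_digits W (Suc k))) / 2"
    unfolding word_val_def by (rule binary_val_Suc) (rule word_digits_le_1)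
  moreover have "(\<lambda>k. word_digits W (Suc k)) = word_digits (rotate 1 W)"
    using word_digits_Suc[OF assms] by auto
  moreover have "word_digits W 0 = letter_code (hd W)"
    using assms by (simp add: word_digits_def hd_conv_nth)
  ultimately show ?thesis
    unfolding word_val_def by simp
qed

lemma word_val_bounds:
  assumes "L \<in> set W"
  shows "0 \<le> word_val W" "word_val W < 1"
proof -
  obtain i where "i < length W" "W ! i = L"
    using assms by (metis in_set_conv_nth)
  then have "word_digits W i = 0"
    unfolding word_digits_def letter_code_def by simp
  then show "0 \<le> word_val W" "word_val W < 1"
    unfolding word_val_def using binary_val_nonneg binary_val_less_1 word_digits_le_1 by blast+
qed

lemma word_val_pos:
  assumes "R \<in> set W"
  shows "0 < word_val W"
proof -
  obtain i where "i < length W" "W ! i = R"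
    using assms by (metis in_set_conv_nth)
  then have "word_digits W i = 1"
    unfolding word_digits_def letter_code_def by simp
  then show ?thesis
    unfolding word_val_def using binary_val_pos word_digits_le_1 by blast
qed

lemma Ber_word_val:
  assumes "L \<in> set W"
  shows "Ber (word_val W) = word_val (rotate 1 W)"
proof -
  have "W \<noteq> []"
    using assms by auto
  then have "2 * word_val W = of_int (int (letter_code (hd W))) + word_val (rotate 1 W)"
    using word_val_rotate1[of W] by simp
  moreover have "frac (word_val (rotate 1 W)) = word_val (rotate 1 W)"
    using word_val_bounds[of "rotate 1 W"] assms by (simp add: frac_eq)
  ultimately show ?thesis
    unfolding Ber_def by (metis frac_add_of_int_left)
qed

lemma funpow_Ber_word_val:
  assumes "L \<in> set W"
  shows "(Ber ^^ k) (word_val W) = word_val (rotate k W)"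
proof (induction k)
  case (Suc k)
  have "L \<in> set (rotate k W)"
    using assms by simp
  then show ?case
    using Suc Ber_word_val[of "rotate k W"] by (simp add: rotate_rotate[symmetric] rotate1_rotate_swap)
qed simp

lemma word_val_half:
  assumes "L \<in> set W" "R \<in> set W"
  shows "hd W = L \<Longrightarrow> word_val W < 1/2" "hd W = R \<Longrightarrow> 1/2 < word_val W"
proof -
  have "W \<noteq> []"
    using assms by auto
  then show "hd W = L \<Longrightarrow> word_val W < 1/2" "hd W = R \<Longrightarrow> 1/2 < word_val W"
    using word_val_rotate1[of W] word_val_bounds[of "rotate 1 W"] word_val_pos[of "rotate 1 W"] assms
    by (auto simp: letter_code_def)
qed

lemma lex_less_imp_word_val_less:
  assumes "lex_less U V" "length U = length V" "U \<noteq> []"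
  shows "word_val U < word_val V"
proof -
  let ?n = "length U"
  obtain i where i: "i < ?n" "take i (map letter_code U) = take i (map letter_code V)"
      "letter_code (U ! i) < letter_code (V ! i)"
    using assms(1,2) unfolding lex_less_def lexord_take_index_conv by auto
  have letters: "U ! i = L" "V ! i = R"
    using i(3) by (cases "U ! i"; cases "V ! i"; simp add: letter_code_def)+
  have "word_digits U k = word_digits V k" if "k < i" for k
  proof -
    have "map letter_code U ! k = map letter_code V ! k"
      using i(2) that by (metis nth_take)
    then show ?thesis
      using that i(1) assms(2) unfolding word_digits_def by simp
  qed
  then show ?thesis
    unfolding word_val_def
    using letters i(1) assms(2,3) word_digits_le_1
    by (intro binary_val_less[where m = i and j = "i + ?n"]) (auto simp: word_digits_def letter_code_def)
qed

lemma lex_less_total: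
  assumes "length U = length V" "U \<noteq> V"
  shows "lex_less U V \<or> lex_less V U"
proof -
  have "inj letter_code"
    unfolding inj_def letter_code_def by (metis letter.exhaust zero_neq_one)
  then have "map letter_code U \<noteq> map letter_code V"
    using assms(2) by (simp add: inj_map_eq_map)
  moreover have "\<forall>a b. (a, b) \<in> {(a, b). a < b} \<or> a = b \<or> (b, a) \<in> {(a, b::nat). a < b}"
    by auto
  ultimately show ?thesis
    unfolding lex_less_def using lexord_linear by blast
qed

lemma word_val_less_iff_lex_less:
  assumes "length U = length V" "U \<noteq> []"
  shows "word_val U < word_val V \<longleftrightarrow> lex_less U V"
  using lex_less_total[OF assms(1)] lex_less_imp_word_val_less assms by fastforce

lemma word_val_inj:
  assumes "length U = length V" "U \<noteq> []" "word_val U = word_val V"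
  shows "U = V"
  using lex_less_total[OF assms(1)] lex_less_imp_word_val_less assms by fastforce

section \<open>The braid of a word as a Bernoulli orbit\<close>

definition orbit_braid :: "letter list \<Rightarrow> braid_diag" where
  "orbit_braid W =
     (let x = periodic_binary (map letter_code W);
          Orb = {(Ber ^^ k) x | k. True};
          pos = (\<lambda>y. card {z \<in> Orb. z < y});
          pt = (\<lambda>i. THE y. y \<in> Orb \<and> pos y = i)
      in mk_diag (card Orb)
           (\<lambda>i. pos (Ber (pt i)))
           (\<lambda>i j. pt i \<le> 1/2 \<and> 1/2 \<le> pt j))"

lemma form_braid_eq_orbit_braid: "form_braid Q = orbit_braid (WQ Q)"
  unfolding form_braid_def orbit_braid_def ..

lemma mk_diag_cong:
  assumes "\<And>i. i < n \<Longrightarrow> \<sigma> i = \<sigma>' i" "\<And>i j. i < n \<Longrightarrow> j < n \<Longrightarrow> ov i j = ov' i j"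
  shows "mk_diag n \<sigma> ov = mk_diag n \<sigma>' ov'"
proof -
  have "strands_cross \<sigma> i j = strands_cross \<sigma>' i j" if "i < n" "j < n" for i j
    using assms that unfolding strands_cross_def by auto
  then show ?thesis
    unfolding mk_diag_def using assms by (intro prod_eqI ext) auto
qed

lemma bij_betw_rank:
  fixes f :: "'a \<Rightarrow> 'b::linorder"
  assumes "finite S" "inj_on f S"
  shows "bij_betw (\<lambda>x. card {y \<in> S. f y < f x}) S {..<card S}"
proof -
  let ?rank = "\<lambda>x. card {y \<in> S. f y < f x}"
  have less: "?rank x < ?rank y" if "x \<in> S" "y \<in> S" "f x < f y" for x y
  proof -
    have "{z \<in> S. f z < f x} \<subset> {z \<in> S. f z < f y}"
      using that by auto
    then show ?thesis
      using assms(1) by (simp add: psubset_card_mono)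
  qed
  have inj: "inj_on ?rank S"
  proof (rule inj_onI)
    fix x y assume xy: "x \<in> S" "y \<in> S" "?rank x = ?rank y"
    have "f x = f y"
    proof (rule ccontr)
      assume "f x \<noteq> f y"
      then have "f x < f y \<or> f y < f x"
        by auto
      then show False
        using less[of x y] less[of y x] xy by auto
    qed
    then show "x = y"
      using assms(2) \<open>x \<in> S\<close> \<open>y \<in> S\<close> by (simp add: inj_on_eq_iff)
  qed
  have "?rank x < card S" if "x \<in> S" for x
  proof -
    have "{y \<in> S. f y < f x} \<subset> S"
      using that by auto
    then show ?thesis
      using assms(1) by (simp add: psubset_card_mono)
  qed
  then have "?rank ` S = {..<card S}"
    using card_image[OF inj] by (intro card_subset_eq) auto
  then show ?thesis
    using inj by (simp add: bij_betw_def)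
qed

lemma rots_memD:
  assumes "V \<in> rots W"
  shows "length V = length W" "set V = set W" "rotate 1 V \<in> rots W"
proof -
  have "W \<noteq> []"
    using assms unfolding rots_def by auto
  moreover obtain k where "V = rotate k W"
    using assms unfolding rots_def by auto
  ultimately show "length V = length W" "set V = set W" "rotate 1 V \<in> rots W"
    using rotate_in_rots[of W "1 + k"] by (simp_all add: rotate_rotate)
qed

lemma inj_on_word_val_rots: "inj_on word_val (rots W)"
proof (rule inj_onI)
  fix U V assume UV: "U \<in> rots W" "V \<in> rots W" "word_val U = word_val V"
  then have "U \<noteq> []"
    using rots_memD(1)[of U W] unfolding rots_def by auto
  then show "U = V"
    using UV rots_memD(1) word_val_inj by metis
qed

lemma Ber_orbit_eq:
  assumes "L \<in> set W"
  shows "{(Ber ^^ k) (periodic_binary (map letter_code W)) | k. True} = word_val ` rots W"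
proof -
  have "W \<noteq> []"
    using assms by auto
  then show ?thesis
    unfolding periodic_binary_eq_word_val[OF \<open>W \<noteq> []\<close>] funpow_Ber_word_val[OF assms] rots_eq_range[OF \<open>W \<noteq> []\<close>]
    by auto
qed

lemma rk_eq_card_word_val_less:
  assumes "V \<in> rots W"
  shows "rk W V = card {z \<in> word_val ` rots W. z < word_val V}"
proof -
  have "lex_less U V \<longleftrightarrow> word_val U < word_val V" if "U \<in> rots W" for U
    using rots_memD(1)[OF that] rots_memD(1)[OF assms] that
    by (subst word_val_less_iff_lex_less) (auto simp: rots_def)
  then have "{U \<in> rots W. lex_less U V} = {U \<in> rots W. word_val U < word_val V}"
    by auto
  moreover have "{z \<in> word_val ` rots W. z < word_val V} = word_val ` {U \<in> rots W. word_val U < word_val V}"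
    by auto
  moreover have "inj_on word_val {U \<in> rots W. word_val U < word_val V}"
    using inj_on_word_val_rots by (rule inj_on_subset) auto
  ultimately show ?thesis
    unfolding rk_def by (simp add: card_image)
qed

lemma bij_betw_rank_word_val:
  assumes "primitive_word W"
  shows "bij_betw (\<lambda>y. card {z \<in> word_val ` rots W. z < y}) (word_val ` rots W) {..<length W}"
  using bij_betw_rank[of "word_val ` rots W" id] finite_rots card_image[OF inj_on_word_val_rots]
    primitive_word_card_rots[OF assms]
  by simp

lemma rot_at_rk:
  assumes "primitive_word W" "i < length W"
  shows "rot_at W i \<in> rots W" "rk W (rot_at W i) = i"
proof -
  have "bij_betw (rk W) (rots W) {..<length W}"
  proof (rule bij_betw_cong[THEN iffD1])
    show "bij_betw ((\<lambda>y. card {z \<in> word_val ` rots W. z < y}) \<circ> word_val) (rots W) {..<length W}"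
      using bij_betw_rank_word_val[OF assms(1)] inj_on_word_val_rots
      by (intro bij_betw_trans) (auto simp: bij_betw_def)
  qed (simp add: rk_eq_card_word_val_less)
  moreover have "rot_at W i = the_inv_into (rots W) (rk W) i"
    unfolding rot_at_def the_inv_into_def ..
  ultimately show "rot_at W i \<in> rots W" "rk W (rot_at W i) = i"
    using assms(2) by (auto intro: the_inv_into_into f_the_inv_into_f_bij_betw simp: bij_betw_def)
qed

lemma word_braid_eq_orbit_braid:
  assumes "primitive_word W" "2 \<le> length W"
  shows "word_braid W = orbit_braid W"
proof -
  define Orb where "Orb = word_val ` rots W"
  define pos where "pos y = card {z \<in> Orb. z < y}" for y
  define pt where "pt i = (THE y. y \<in> Orb \<and> pos y = i)" for i
  have LR: "L \<in> set W" "R \<in> set W"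
    using primitive_word_letters[OF assms] by auto
  have bij: "bij_betw pos Orb {..<length W}"
    unfolding pos_def Orb_def using bij_betw_rank_word_val[OF assms(1)] .
  have pt: "pt i = word_val (rot_at W i)" if "i < length W" for i
  proof -
    have "pos (word_val (rot_at W i)) = i"
      using rot_at_rk[OF assms(1) that] rk_eq_card_word_val_less unfolding pos_def Orb_def by metis
    then have "the_inv_into Orb pos i = word_val (rot_at W i)"
      using bij rot_at_rk(1)[OF assms(1) that] unfolding Orb_def
      by (intro the_inv_into_f_eq) (auto simp: bij_betw_def)
    then show ?thesis
      unfolding pt_def the_inv_into_def .
  qed
  have "orbit_braid W = mk_diag (length W) (\<lambda>i. pos (Ber (pt i))) (\<lambda>i j. pt i \<le> 1/2 \<and> 1/2 \<le> pt j)"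
    using bij_betw_same_card[OF bij]
    unfolding orbit_braid_def Let_def Ber_orbit_eq[OF LR(1)] Orb_def[symmetric] pos_def pt_def by simp
  also have "\<dots> = word_braid W"
    unfolding word_braid_def
  proof (rule mk_diag_cong)
    fix i assume i: "i < length W"
    note V = rot_at_rk[OF assms(1) i] rots_memD[OF rot_at_rk(1)[OF assms(1) i]]
    show "pos (Ber (pt i)) = rk W (rotate 1 (rot_at W i))"
      using Ber_word_val[of "rot_at W i"] rk_eq_card_word_val_less[OF V(5)] pt[OF i] V LR
      unfolding pos_def Orb_def by simp
  next
    have "(pt i \<le> 1/2 \<longleftrightarrow> hd (rot_at W i) = L) \<and> (1/2 \<le> pt i \<longleftrightarrow> hd (rot_at W i) = R)"
      if i: "i < length W" for i
      using pt[OF i] rots_memD(2)[OF rot_at_rk(1)[OF assms(1) i]] LR word_val_half[of "rot_at W i"]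
      by (cases "hd (rot_at W i)") auto
    then show "(pt i \<le> 1/2 \<and> 1/2 \<le> pt j) = (hd (rot_at W i) = L \<and> hd (rot_at W j) = R)"
      if "i < length W" "j < length W" for i j
      using that by simp
  qed
  finally show ?thesis ..
qed

definition block_letter :: "bool \<Rightarrow> letter" where
  "block_letter b = (if b then L else R)"

fun runs_word :: "bool \<Rightarrow> nat list \<Rightarrow> letter list" where
  "runs_word b [] = []"
| "runs_word b (c # cs) = replicate c (block_letter b) @ runs_word (\<not> b) cs"

lemma runs_word_append:
  "runs_word b (xs @ ys) = runs_word b xs @ runs_word (if even (length xs) then b else \<not> b) ys"
  by (induction xs arbitrary: b) auto

lemma concat_map_eq_runs_word:
  "concat (map (\<lambda>i. replicate (f i) (if even i then L else R)) [0..<m]) = runs_word True (map f [0..<m])"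
  by (induction m) (simp_all add: runs_word_append block_letter_def)

lemma runs_word_concat_replicate:
  "even (length xs) \<Longrightarrow> runs_word b (concat (replicate k xs)) = concat (replicate k (runs_word b xs))"
  by (induction k) (auto simp: runs_word_append)

lemma length_runs_word: "length (runs_word b cs) = sum_list cs"
  by (induction cs arbitrary: b) auto

lemma length_le_sum_list: "\<forall>c\<in>set cs. (1::nat) \<le> c \<Longrightarrow> length cs \<le> sum_list cs"
  by (induction cs) auto

lemma hd_runs_word: "cs \<noteq> [] \<Longrightarrow> \<forall>c\<in>set cs. 1 \<le> c \<Longrightarrow> hd (runs_word b cs) = block_letter b"
  by (cases cs) (auto simp: Suc_le_eq)

lemma last_runs_word:
  "cs \<noteq> [] \<Longrightarrow> \<forall>c\<in>set cs. 1 \<le> c \<Longrightarrow>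
    last (runs_word b cs) = block_letter (if odd (length cs) then b else \<not> b)"
proof (induction cs arbitrary: b)
  case (Cons c cs)
  show ?case
  proof (cases "cs = []")
    case True
    then show ?thesis using Cons by (cases c) auto
  next
    case False
    then have "runs_word (\<not> b) cs \<noteq> []"
      using Cons.prems by (cases cs) (auto simp: Suc_le_eq)
    then show ?thesis
      using Cons.IH[of "\<not> b"] False Cons.prems by auto
  qed
qed simp

lemma runs_word_inj:
  "\<forall>c\<in>set cs. 1 \<le> c \<Longrightarrow> \<forall>c\<in>set cs'. 1 \<le> c \<Longrightarrow> runs_word b cs = runs_word b cs' \<Longrightarrow> cs = cs'"
proof (induction cs arbitrary: b cs')
  case Nil
  then show ?case by (cases cs') (auto simp: Suc_le_eq)
next
  case (Cons c cs)
  then obtain c' cs'' where cs': "cs' = c' # cs''"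
    by (cases cs') (auto simp: Suc_le_eq)
  have first_run: "takeWhile (\<lambda>y. y = block_letter b) (runs_word b (c # ds)) = replicate c (block_letter b)"
    if "\<forall>d\<in>set ds. 1 \<le> d" for c ds
  proof -
    have "takeWhile (\<lambda>y. y = block_letter b) (runs_word (\<not> b) ds) = []"
      using that by (cases ds) (auto simp: Suc_le_eq block_letter_def)
    moreover have "takeWhile (\<lambda>y. y = block_letter b) (replicate c (block_letter b) @ ds')
        = replicate c (block_letter b) @ takeWhile (\<lambda>y. y = block_letter b) ds'" for ds'
      by (rule takeWhile_append2) simp
    ultimately show ?thesis
      by simp
  qed
  have "c = c'"
    using first_run[of cs c] first_run[of cs'' c'] Cons.prems cs' by (metis length_replicate list.set_intros(2))
  then show ?case
    using Cons cs' by auto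
qed

lemma runs_word_exists:
  "V = [] \<or> hd V = block_letter b \<Longrightarrow> \<exists>cs. V = runs_word b cs \<and> (\<forall>c\<in>set cs. 1 \<le> c)"
proof (induction "length V" arbitrary: V b rule: less_induct)
  case less
  show ?case
  proof (cases "V = []")
    case True
    then show ?thesis by (intro exI[of _ "[]"]) simp
  next
    case False
    let ?P = "\<lambda>y. y = block_letter b"
    define c where "c = length (takeWhile ?P V)"
    define rest where "rest = dropWhile ?P V"
    have "takeWhile ?P V = replicate c (block_letter b)"
      unfolding c_def by (metis (mono_tags) replicate_length_same set_takeWhileD)
    then have V: "V = replicate c (block_letter b) @ rest"
      using takeWhile_dropWhile_id[of ?P V] rest_def by simp
    have c: "1 \<le> c"
      using False less.prems unfolding c_def by (cases V) auto
    have "rest = [] \<or> hd rest = block_letter (\<not> b)"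
    proof (cases "rest = []")
      case False
      then have "hd rest \<noteq> block_letter b"
        unfolding rest_def using hd_dropWhile[of ?P V] by simp
      then show ?thesis
        unfolding block_letter_def by (cases "hd rest") (auto split: if_splits)
    qed simp
    moreover have "length rest < length V"
      using V c by simp
    ultimately obtain cs where "rest = runs_word (\<not> b) cs" "\<forall>c\<in>set cs. 1 \<le> c"
      using less.hyps by blast
    then show ?thesis
      using V c by (intro exI[of _ "c # cs"]) simp
  qed
qed

lemma runs_word_ne: "cs \<noteq> [] \<Longrightarrow> \<forall>c\<in>set cs. 1 \<le> c \<Longrightarrow> runs_word b cs \<noteq> []"
  by (cases cs) (auto simp: Suc_le_eq)

lemma runs_word_power:
  assumes cs: "\<forall>c\<in>set cs. 1 \<le> c" "even (length cs)" "cs \<noteq> []"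
    and U: "runs_word True cs = concat (replicate (Suc k) U)"
  shows "\<exists>ds. even (length ds) \<and> cs = concat (replicate (Suc k) ds)"
proof -
  have "U \<noteq> []"
    using U runs_word_ne[OF cs(3,1)] by auto
  then have "hd U = hd (runs_word True cs)" "last U = last (runs_word True cs)"
    unfolding U by (simp, simp only: concat_replicate_Suc_right[of k], simp)
  then have hd_U: "hd U = block_letter True" and last_U: "last U = block_letter False"
    using cs hd_runs_word last_runs_word by auto
  obtain ds where ds: "U = runs_word True ds" "\<forall>d\<in>set ds. 1 \<le> d"
    using runs_word_exists[of U True] hd_U by blast
  have "ds \<noteq> []"
    using ds \<open>U \<noteq> []\<close> by auto
  then have "even (length ds)"
    using last_runs_word[of ds True] ds last_U by (auto simp: block_letter_def split: if_splits)
  then have "runs_word True cs = runs_word True (concat (replicate (Suc k) ds))"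
    unfolding U ds(1) by (rule runs_word_concat_replicate[symmetric])
  moreover have "\<forall>d\<in>set (concat (replicate (Suc k) ds)). 1 \<le> d"
    using ds(2) by (simp del: replicate_Suc)
  ultimately have "cs = concat (replicate (Suc k) ds)"
    using runs_word_inj cs(1) by blast
  then show ?thesis
    using \<open>even (length ds)\<close> by blast
qed

lemma primitive_runs_word_iff:
  assumes cs: "\<forall>c\<in>set cs. 1 \<le> c" "even (length cs)" "cs \<noteq> []"
  shows "primitive_word (runs_word True cs) \<longleftrightarrow>
    \<not> (\<exists>ds k. 2 \<le> k \<and> even (length ds) \<and> cs = concat (replicate k ds))"
proof
  assume prim: "primitive_word (runs_word True cs)"
  show "\<not> (\<exists>ds k. 2 \<le> k \<and> even (length ds) \<and> cs = concat (replicate k ds))"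
  proof
    assume "\<exists>ds k. 2 \<le> k \<and> even (length ds) \<and> cs = concat (replicate k ds)"
    then obtain ds k where "2 \<le> k" "runs_word True cs = concat (replicate k (runs_word True ds))"
      using runs_word_concat_replicate by blast
    then show False
      using prim unfolding primitive_word_def by blast
  qed
next
  assume no_power: "\<not> (\<exists>ds k. 2 \<le> k \<and> even (length ds) \<and> cs = concat (replicate k ds))"
  have False if k: "2 \<le> k" and U: "runs_word True cs = concat (replicate k U)" for k U
  proof -
    obtain k' where "k = Suc k'"
      using k by (cases k) auto
    then show False
      using runs_word_power[OF cs] k U no_power by blast
  qed
  then show "primitive_word (runs_word True cs)"
    unfolding primitive_word_def using runs_word_ne[OF cs(3,1)] by blast
qed

definition eventual_period :: "(nat \<Rightarrow> int) \<Rightarrow> nat \<Rightarrow> bool" where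
  "eventual_period d p \<longleftrightarrow> 0 < p \<and> (\<exists>N. \<forall>k\<ge>N. d (k + p) = d k)"

definition even_period_block :: "(nat \<Rightarrow> int) \<Rightarrow> nat list" where
  "even_period_block d =
     (let p = LEAST p. eventual_period d p;
          N = LEAST N. \<forall>k\<ge>N. d (k + p) = d k;
          N' = (if even N then N else N + 1);
          E = (if even p then p else 2 * p)
      in map (\<lambda>i. nat (d (N' + i))) [0..<E])"

lemma WQ_eq_runs_word: "WQ Q = runs_word True (even_period_block (cf_digit (wQ Q)))"
  unfolding WQ_def even_period_block_def cf_even_preperiod_def cf_even_period_def
    cf_preperiod_def cf_period_def eventual_period_def Let_def concat_map_eq_runs_word ..

lemma even_period_blockE:
  assumes "eventual_period d q"
  obtains p N where
    "eventual_period d p" "\<And>p'. eventual_period d p' \<Longrightarrow> p \<le> p'"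
    "\<And>k. N \<le> k \<Longrightarrow> d (k + p) = d k" "even N" "(\<And>k. d (k + p) = d k) \<Longrightarrow> N = 0"
    "even_period_block d = map (\<lambda>i. nat (d (N + i))) [0..<(if even p then p else 2 * p)]"
proof -
  define p where "p = (LEAST p. eventual_period d p)"
  define N where "N = (LEAST N. \<forall>k\<ge>N. d (k + p) = d k)"
  have p: "eventual_period d p" "\<And>p'. eventual_period d p' \<Longrightarrow> p \<le> p'"
    unfolding p_def using assms by (auto intro: LeastI Least_le)
  then have "\<exists>N. \<forall>k\<ge>N. d (k + p) = d k"
    unfolding eventual_period_def by blast
  then have N: "\<forall>k\<ge>N. d (k + p) = d k"
    unfolding N_def by (rule LeastI_ex)
  have N0: "N = 0" if "\<And>k. d (k + p) = d k"
    unfolding N_def using that by (intro Least_eq_0) simp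
  show thesis
  proof (rule that[of p "if even N then N else N + 1"])
    show "d (k + p) = d k" if "(if even N then N else N + 1) \<le> k" for k
      using N that by (simp split: if_splits)
  qed (use p N0 in \<open>auto simp: even_period_block_def Let_def p_def N_def\<close>)
qed

lemma periodic_add_mult:
  fixes f :: "nat \<Rightarrow> 'a"
  assumes "\<And>i. f (i + p) = f i"
  shows "f (i + j * p) = f i"
proof (induction j)
  case (Suc j)
  have "f (i + Suc j * p) = f ((i + j * p) + p)"
    by (simp add: algebra_simps)
  then show ?case
    using assms Suc by simp
qed simp

lemma periodic_mod_eq:
  fixes f :: "nat \<Rightarrow> 'a"
  assumes "\<And>i. f (i + p) = f i"
  shows "f i = f (i mod p)"
  using periodic_add_mult[of f p, OF assms, of "i mod p" "i div p"] by (simp add: mod_div_mult_eq)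

lemma nth_concat_replicate:
  "i < k * length U \<Longrightarrow> concat (replicate k U) ! i = U ! (i mod length U)"
proof (induction k arbitrary: i)
  case (Suc k)
  show ?case
  proof (cases "i < length U")
    case False
    then have "i - length U < k * length U"
      using Suc.prems by simp
    then show ?thesis
      using False Suc.IH[of "i - length U"] by (simp add: nth_append le_mod_geq)
  qed (simp add: nth_append)
qed simp

lemma concat_replicate_period:
  fixes f :: "nat \<Rightarrow> 'a"
  assumes f: "\<And>i. f (i + length xs) = f i" "\<And>i. i < length xs \<Longrightarrow> xs ! i = f i"
    and xs: "xs = concat (replicate k ys)" "xs \<noteq> []"
  shows "f (i + length ys) = f i"
proof -
  have "length xs = k * length ys"
    using xs(1) by (simp add: length_concat sum_list_replicate)
  then have "0 < length ys" "length ys dvd length xs"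
    using xs(2) by auto
  have "f j = ys ! (j mod length ys)" for j
  proof -
    have "j mod length xs < k * length ys"
      using xs(2) \<open>length xs = k * length ys\<close> by (metis length_greater_0_conv mod_less_divisor)
    then have "xs ! (j mod length xs) = ys ! ((j mod length xs) mod length ys)"
      using xs(1) by (simp only: nth_concat_replicate)
    also have "\<dots> = ys ! (j mod length ys)"
      using \<open>length ys dvd length xs\<close> by (simp add: mod_mod_cancel)
    finally have "xs ! (j mod length xs) = ys ! (j mod length ys)" .
    moreover have "f j = f (j mod length xs)"
      by (rule periodic_mod_eq) (rule f(1))
    ultimately show ?thesis
      using f(2) xs(2) by simp
  qed
  then show ?thesis
    by simp
qed

lemma even_period_block_shifted:
  assumes "eventual_period d q" and pos: "\<And>k. 1 \<le> k \<Longrightarrow> 1 \<le> d k"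
  obtains p and f :: "nat \<Rightarrow> nat"
  where "0 < p" "\<And>m. 0 < m \<Longrightarrow> (\<And>i. f (i + m) = f i) \<Longrightarrow> p \<le> m"
    "\<And>i. f (i + p) = f i" "\<And>i. 1 \<le> f i"
    "even_period_block d = map f [0..<(if even p then p else 2 * p)]"
proof -
  obtain p N where p: "eventual_period d p" "\<And>p'. eventual_period d p' \<Longrightarrow> p \<le> p'"
    and N: "\<And>k. N \<le> k \<Longrightarrow> d (k + p) = d k" "even N" "(\<And>k. d (k + p) = d k) \<Longrightarrow> N = 0"
    and block: "even_period_block d = map (\<lambda>i. nat (d (N + i))) [0..<(if even p then p else 2 * p)]"
    using even_period_blockE[OF assms(1)] by blast
  have "0 < p"
    using p(1) unfolding eventual_period_def by simp
  have per: "d (N + (i + p)) = d (N + i)" for i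
    using N(1)[of "N + i"] by (simp add: add.assoc)
  have d_pos: "1 \<le> d (N + i)" for i
  proof (cases "N + i = 0")
    case True
    then show ?thesis
      using pos[of "N + i + p"] per[of i] \<open>0 < p\<close> by simp
  qed (use pos[of "N + i"] in linarith)
  show thesis
  proof (rule that[of p "\<lambda>i. nat (d (N + i))", OF \<open>0 < p\<close> _ _ _ block])
    fix m assume "0 < m" and per_m: "\<And>i. nat (d (N + (i + m))) = nat (d (N + i))"
    have "d (k + m) = d k" if "N \<le> k" for k
      using per_m[of "k - N"] d_pos[of "k - N"] d_pos[of "k - N + m"] that by (simp add: add.assoc)
    then show "p \<le> m"
      using p(2) \<open>0 < m\<close> unfolding eventual_period_def by blast
  next
    show "nat (d (N + (i + p))) = nat (d (N + i))" for i
      using per[of i] by simp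
    show "1 \<le> nat (d (N + i))" for i
      using nat_mono[OF d_pos[of i]] by simp
  qed
qed

lemma primitive_runs_word_even_period_block:
  assumes "eventual_period d q" "\<And>k. 1 \<le> k \<Longrightarrow> 1 \<le> d k"
  shows "primitive_word (runs_word True (even_period_block d))"
    and "2 \<le> length (runs_word True (even_period_block d))"
proof -
  obtain p and f :: "nat \<Rightarrow> nat" where "0 < p"
    and p_min: "\<And>m. 0 < m \<Longrightarrow> (\<And>i. f (i + m) = f i) \<Longrightarrow> p \<le> m"
    and per: "\<And>i. f (i + p) = f i" and pos: "\<And>i. 1 \<le> f i"
    and block: "even_period_block d = map f [0..<(if even p then p else 2 * p)]"
    using even_period_block_shifted[OF assms] by blast
  define E where "E = (if even p then p else 2 * p)"
  define ds where "ds = even_period_block d"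
  have E: "2 \<le> E" "even E" "length ds = E"
    using \<open>0 < p\<close> unfolding E_def ds_def block by auto
  have ds_pos: "\<forall>c\<in>set ds. 1 \<le> c"
    using pos unfolding ds_def block by auto
  show "2 \<le> length (runs_word True ds)"
    using length_le_sum_list[OF ds_pos] E unfolding length_runs_word by simp
  have False if k: "2 \<le> k" and es: "even (length es)" "ds = concat (replicate k es)" for k es
  proof -
    have "E = k * length es"
      using E(3) unfolding es(2) by (simp add: length_concat sum_list_replicate)
    then have "0 < length es"
      using E by (cases "length es") auto
    have f_per: "f (i + E) = f i" for i
      using per[of i] per[of "i + p"] unfolding E_def by (simp add: add.assoc mult_2)
    have "f (i + length es) = f i" for i
      by (rule concat_replicate_period[OF _ _ es(2)]) (use f_per E in \<open>auto simp: ds_def block E_def[symmetric]\<close>)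
    then have "p \<le> length es"
      using p_min[OF \<open>0 < length es\<close>] by simp
    moreover have "2 * length es \<le> E"
      using \<open>E = k * length es\<close> k by simp
    ultimately have "E = 2 * p" "length es = p"
      using \<open>0 < length es\<close> unfolding E_def by (cases "even p"; simp; linarith)+
    then show False
      using es(1) E_def \<open>0 < p\<close> by (simp split: if_splits)
  qed
  then show "primitive_word (runs_word True ds)"
    using primitive_runs_word_iff[OF ds_pos] E by fastforce
qed

lemma minimal_period_of_periodic:
  assumes per: "\<And>k. d (k + m) = d k" "0 < m"
    and p: "eventual_period d p" "\<And>p'. eventual_period d p' \<Longrightarrow> p \<le> p'"
  shows "d (k + p) = d k" and "p dvd m"
proof -
  obtain N where N: "\<forall>k\<ge>N. d (k + p) = d k" and "0 < p"
    using p(1) unfolding eventual_period_def by blast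
  have shift: "d (k + N * m) = d k" for k
    using periodic_add_mult[of d m, OF per(1)] .
  have "N \<le> k + N * m" for k
    using per(2) by (simp add: trans_le_add2)
  then have "d (k + N * m + p) = d (k + N * m)" for k
    using N by simp
  then show pure: "d (k + p) = d k" for k
    using shift[of k] shift[of "k + p"] by (simp add: algebra_simps)
  show "p dvd m"
  proof (rule ccontr)
    assume "\<not> p dvd m"
    then have r: "0 < m mod p" "m mod p < p"
      using \<open>0 < p\<close> by (simp_all add: mod_greater_zero_iff_not_dvd)
    have "d (k + m mod p) = d k" for k
    proof -
      have "d (k + m mod p) = d (k + m mod p + (m div p) * p)"
        by (rule periodic_add_mult[of d p, OF pure, symmetric])
      also have "k + m mod p + (m div p) * p = k + m"
        by simp
      finally show ?thesis
        using per(1) by simp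
    qed
    then have "eventual_period d (m mod p)"
      unfolding eventual_period_def using r by auto
    then show False
      using p(2) r by fastforce
  qed
qed

lemma concat_replicate_take:
  assumes "E dvd length xs" "0 < E" "\<And>i. i < length xs \<Longrightarrow> xs ! i = xs ! (i mod E)"
  shows "xs = concat (replicate (length xs div E) (take E xs))"
proof (rule nth_equalityI)
  have "E \<le> length xs \<or> xs = []"
    using assms(1,2) by (auto dest: dvd_imp_le)
  then show len: "length xs = length (concat (replicate (length xs div E) (take E xs)))"
    using assms(1) by (auto simp: length_concat sum_list_replicate)
  fix i assume i: "i < length xs"
  then have "E \<le> length xs"
    using assms(1,2) by (auto dest: dvd_imp_le)
  then have "concat (replicate (length xs div E) (take E xs)) ! i = take E xs ! (i mod E)"
    using nth_concat_replicate[of i "length xs div E" "take E xs"] i assms(1) by simp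
  also have "\<dots> = xs ! i"
    using assms(2,3) i by simp
  finally show "xs ! i = concat (replicate (length xs div E) (take E xs)) ! i" ..
qed

lemma even_period_block_of_periodic:
  assumes per: "\<And>k. d (k + m) = d k" and m: "0 < m" "even m"
  obtains E where "0 < E" "even E" "E dvd m" "\<And>k. d (k + E) = d k"
    "even_period_block d = map (\<lambda>i. nat (d i)) [0..<E]"
proof -
  have "eventual_period d m"
    unfolding eventual_period_def using per m by auto
  then obtain p N where p: "eventual_period d p" "\<And>p'. eventual_period d p' \<Longrightarrow> p \<le> p'"
    and "\<And>k. N \<le> k \<Longrightarrow> d (k + p) = d k" "even N"
    and N: "(\<And>k. d (k + p) = d k) \<Longrightarrow> N = 0"
    and block: "even_period_block d = map (\<lambda>i. nat (d (N + i))) [0..<(if even p then p else 2 * p)]"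
    using even_period_blockE by blast
  have pure: "d (k + p) = d k" for k
    using minimal_period_of_periodic[OF per m(1) p] by blast
  have "p dvd m"
    using minimal_period_of_periodic[OF per m(1) p] by blast
  define E where "E = (if even p then p else 2 * p)"
  have "E dvd m"
  proof (cases "even p")
    case False
    obtain q where q: "m = p * q"
      using \<open>p dvd m\<close> by (auto elim: dvdE)
    moreover have "even q"
      using q False m(2) by simp
    ultimately show ?thesis
      using False unfolding E_def by (auto elim: evenE)
  qed (use \<open>p dvd m\<close> E_def in simp)
  show thesis
  proof (rule that[OF _ _ \<open>E dvd m\<close>])
    show "0 < E" "even E"
      using p(1) unfolding E_def eventual_period_def by auto
    show "d (k + E) = d k" for k
      using pure[of k] pure[of "k + p"] unfolding E_def by (simp add: add.assoc mult_2)
    show "even_period_block d = map (\<lambda>i. nat (d i)) [0..<E]"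
      using block N pure unfolding E_def by simp
  qed
qed

lemma even_period_block_periodic:
  assumes cs: "\<forall>c\<in>set cs. 1 \<le> c" "even (length cs)" "cs \<noteq> []"
    and prim: "primitive_word (runs_word True cs)"
    and d: "\<And>k. d k = int (cs ! (k mod length cs))"
  shows "even_period_block d = cs"
proof -
  obtain E where E: "0 < E" "even E" "E dvd length cs" "\<And>k. d (k + E) = d k"
    and block: "even_period_block d = map (\<lambda>i. nat (d i)) [0..<E]"
    using even_period_block_of_periodic[of d "length cs"] d cs(2,3) by auto
  have "E \<le> length cs"
    using E(3) cs(3) by (simp add: dvd_imp_le)
  have block_take: "even_period_block d = take E cs"
    using \<open>E \<le> length cs\<close> d unfolding block by (intro nth_equalityI) auto
  have "cs = concat (replicate (length cs div E) (take E cs))"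
  proof (rule concat_replicate_take[OF E(3,1)])
    fix i assume "i < length cs"
    then have "int (cs ! i) = d i"
      using d[of i] by simp
    also have "\<dots> = d (i mod E)"
      by (rule periodic_mod_eq) (rule E(4))
    also have "\<dots> = int (cs ! (i mod E))"
      using d[of "i mod E"] E(1) \<open>E \<le> length cs\<close>
      by (metis mod_less mod_less_divisor order_less_le_trans)
    finally show "cs ! i = cs ! (i mod E)"
      by simp
  qed
  moreover have "even (length (take E cs))"
    using \<open>E \<le> length cs\<close> E(2) by simp
  ultimately have "\<not> 2 \<le> length cs div E"
    using primitive_runs_word_iff[OF cs] prim by blast
  then have "E = length cs"
    using E(1,3) \<open>E \<le> length cs\<close> by (auto elim!: dvdE)
  then show ?thesis
    using block_take by simp
qed

section \<open>Purely periodic continued fractions\<close>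

fun cf_eval :: "nat list \<Rightarrow> real \<Rightarrow> real" where
  "cf_eval [] x = x"
| "cf_eval (c # cs) x = real c + 1 / cf_eval cs x"

text \<open>\<open>cf_mat cs = (A, B, C, D)\<close> is the product of the matrices \<open>[[c, 1], [1, 0]]\<close> over
 \<open>c \<in> cs\<close>, so that \<open>cf_eval cs x = (A x + B) / (C x + D)\<close>.\<close>
fun cf_mat :: "nat list \<Rightarrow> int \<times> int \<times> int \<times> int" where
  "cf_mat [] = (1, 0, 0, 1)"
| "cf_mat (c # cs) = (case cf_mat cs of (A, B, C, D) \<Rightarrow> (int c * A + C, int c * B + D, A, B))"

lemma cf_mat_entries:
  "\<forall>c\<in>set cs. 1 \<le> c \<Longrightarrow> cf_mat cs = (A, B, C, D) \<Longrightarrow>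
    0 \<le> A \<and> 0 \<le> B \<and> 0 \<le> C \<and> 0 \<le> D \<and> A * D - B * C = (-1) ^ length cs \<and>
    (cs \<noteq> [] \<longrightarrow> 1 \<le> A \<and> 1 \<le> B \<and> 1 \<le> C) \<and> (2 \<le> length cs \<longrightarrow> 2 \<le> A \<and> 1 \<le> D)"
proof (induction cs arbitrary: A B C D)
  case (Cons c cs)
  obtain A' B' C' D' where m: "cf_mat cs = (A', B', C', D')"
    by (cases "cf_mat cs") auto
  have IH: "0 \<le> A' \<and> 0 \<le> B' \<and> 0 \<le> C' \<and> 0 \<le> D' \<and> A' * D' - B' * C' = (-1) ^ length cs \<and>
    (cs \<noteq> [] \<longrightarrow> 1 \<le> A' \<and> 1 \<le> B' \<and> 1 \<le> C') \<and> (2 \<le> length cs \<longrightarrow> 2 \<le> A' \<and> 1 \<le> D')"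
    using Cons.IH[OF _ m] Cons.prems by simp
  have eq: "A = int c * A' + C'" "B = int c * B' + D'" "C = A'" "D = B'"
    using Cons.prems m by auto
  have c: "1 \<le> c"
    using Cons.prems by simp
  have det: "A * D - B * C = - (A' * D' - B' * C')"
    unfolding eq by (simp add: algebra_simps)
  show ?case
  proof (cases "cs = []")
    case True
    then have "A' = 1" "B' = 0" "C' = 0" "D' = 1"
      using m by auto
    then show ?thesis
      using eq c True by simp
  next
    case False
    then have "1 \<le> A'" "1 \<le> B'" "1 \<le> C'"
      using IH by auto
    moreover have "A' \<le> int c * A'" "B' \<le> int c * B'"
      using c IH by (simp_all add: mult_le_cancel_right1)
    ultimately have "1 \<le> A" "1 \<le> B" "1 \<le> C" "2 \<le> A" "1 \<le> D"
      using IH unfolding eq by linarith+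
    then show ?thesis
      using det IH by simp
  qed
qed simp

lemma cf_eval_pos: "0 < x \<Longrightarrow> 0 < cf_eval cs x"
  by (induction cs) (auto intro: add_nonneg_pos)

lemma cf_eval_gt_1:
  assumes "0 < x" "cs \<noteq> []" "\<forall>c\<in>set cs. 1 \<le> c"
  shows "1 < cf_eval cs x"
proof -
  obtain c cs' where cs: "cs = c # cs'"
    using assms(2) by (cases cs) auto
  have "0 < 1 / cf_eval cs' x"
    using cf_eval_pos[OF assms(1)] by simp
  moreover have "1 \<le> real c"
    using assms(3) cs by simp
  ultimately have "1 < real c + 1 / cf_eval cs' x"
    by linarith
  then show ?thesis
    unfolding cs by simp
qed

lemma cf_eval_cf_mat:
  "0 < x \<Longrightarrow> cf_mat cs = (A, B, C, D) \<Longrightarrow>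
     0 < C * x + D \<and> cf_eval cs x = (A * x + B) / (C * x + D)"
proof (induction cs arbitrary: A B C D)
  case (Cons c cs)
  obtain A' B' C' D' where m: "cf_mat cs = (A', B', C', D')"
    by (cases "cf_mat cs") auto
  have IH: "0 < C' * x + D'" "cf_eval cs x = (A' * x + B') / (C' * x + D')"
    using Cons.IH[OF Cons.prems(1) m] by auto
  have eq: "A = int c * A' + C'" "B = int c * B' + D'" "C = A'" "D = B'"
    using Cons.prems m by auto
  have pos: "0 < A' * x + B'"
    using cf_eval_pos[OF Cons.prems(1), of cs] IH by (simp add: zero_less_divide_iff)
  have "cf_eval (c # cs) x = real c + (C' * x + D') / (A' * x + B')"
    using IH(2) by simp
  also have "\<dots> = ((int c * A' + C') * x + (int c * B' + D')) / (A' * x + B')"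
    using pos by (simp add: field_simps)
  finally show ?case
    using pos unfolding eq by simp
qed simp

lemma floor_add_inverse: "1 < v \<Longrightarrow> \<lfloor>real c + 1 / v\<rfloor> = int c"
  by (simp add: floor_eq_iff)

lemma cf_eval_drop_Suc:
  assumes cs: "\<forall>c\<in>set cs. 1 \<le> c" and x: "0 < x" "cf_eval cs x = x" and j: "j < length cs"
  shows "cf_eval (drop j cs) x = real (cs ! j) + 1 / cf_eval (drop (Suc j mod length cs) cs) x"
    and "1 < cf_eval (drop (Suc j mod length cs) cs) x"
proof -
  have drop: "drop j cs = cs ! j # drop (Suc j) cs"
    using j by (simp add: Cons_nth_drop_Suc)
  show "1 < cf_eval (drop (Suc j mod length cs) cs) x"
  proof (cases "Suc j = length cs")
    case True
    then have "cs \<noteq> []"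
      by auto
    then show ?thesis
      using cf_eval_gt_1[OF x(1) _ cs] True by simp
  next
    case False
    then have "Suc j mod length cs = Suc j" "drop (Suc j) cs \<noteq> []"
      using j by simp_all
    moreover have "\<forall>c\<in>set (drop (Suc j) cs). 1 \<le> c"
      using cs by (auto dest: in_set_dropD)
    ultimately show ?thesis
      using cf_eval_gt_1[OF x(1)] by simp
  qed
  have "cf_eval (drop (Suc j) cs) x = cf_eval (drop (Suc j mod length cs) cs) x"
    using j x(2) by (cases "Suc j = length cs") simp_all
  then show "cf_eval (drop j cs) x = real (cs ! j) + 1 / cf_eval (drop (Suc j mod length cs) cs) x"
    unfolding drop by simp
qed

lemma cf_rem_fixed_point:
  assumes cs: "\<forall>c\<in>set cs. 1 \<le> c" "cs \<noteq> []" and x: "0 < x" "cf_eval cs x = x"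
  shows "cf_rem x k = cf_eval (drop (k mod length cs) cs) x"
proof (induction k)
  case 0
  then show ?case using x by simp
next
  case (Suc k)
  define j where "j = k mod length cs"
  have j: "j < length cs"
    using cs(2) j_def by simp
  note step = cf_eval_drop_Suc[OF cs(1) x j]
  have "\<lfloor>cf_rem x k\<rfloor> = int (cs ! j)"
    using Suc step floor_add_inverse j_def by simp
  then show ?case
    using Suc step unfolding j_def by (simp add: mod_Suc_eq)
qed

lemma cf_digit_fixed_point:
  assumes "\<forall>c\<in>set cs. 1 \<le> c" "cs \<noteq> []" "0 < x" "cf_eval cs x = x"
  shows "cf_digit x k = int (cs ! (k mod length cs))"
  using cf_rem_fixed_point[OF assms, of k] cf_eval_drop_Suc[OF assms(1,3,4), of "k mod length cs"]
    floor_add_inverse assms(2)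
  unfolding cf_digit_def by simp

lemma square_minus_4_not_square:
  fixes t k :: int
  assumes "3 \<le> t"
  shows "t^2 - 4 \<noteq> k^2"
proof
  assume k: "t^2 - 4 = k^2"
  then have "\<bar>k\<bar>^2 < t^2"
    by simp
  then have "\<bar>k\<bar> < t"
    by (rule power_less_imp_less_base) (use assms in simp)
  moreover have "(t - 1)^2 < \<bar>k\<bar>^2"
    using k assms by (simp add: power2_eq_square algebra_simps)
  then have "t - 1 < \<bar>k\<bar>"
    by (rule power_less_imp_less_base) simp
  ultimately show False
    by linarith
qed

lemma cf_mat_even:
  assumes "\<forall>c\<in>set cs. 1 \<le> c" "even (length cs)" "cs \<noteq> []" "cf_mat cs = (A, B, C, D)"
  shows "A * D - B * C = 1" "1 \<le> B" "1 \<le> C" "2 \<le> A" "1 \<le> D"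
proof -
  have "length cs \<noteq> 0"
    using assms(3) by simp
  then have "2 \<le> length cs"
    using assms(2) by presburger
  then show "A * D - B * C = 1" "1 \<le> B" "1 \<le> C" "2 \<le> A" "1 \<le> D"
    using cf_mat_entries[OF assms(1,4)] assms(2,3) by auto
qed

text \<open>For \<open>cf_mat cs = (A, B, C, D)\<close>, the positive fixed point of \<open>x \<mapsto> (A x + B) / (C x + D)\<close>
 is \<open>wQ Q\<close> for \<open>Q = (C, D - A, -B)\<close>, whose discriminant is \<open>(A + D)^2 - 4\<close> because the
 determinant is 1 for even length.\<close>
lemma Qplus_cf_mat:
  assumes cs: "\<forall>c\<in>set cs. 1 \<le> c" "even (length cs)" "cs \<noteq> []" and m: "cf_mat cs = (A, B, C, D)"
  shows "(C, D - A, - B) \<in> Qplus" "disc (C, D - A, - B) = (D - A)^2 + 4 * B * C"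
proof -
  note ABCD = cf_mat_even[OF cs m]
  show "disc (C, D - A, - B) = (D - A)^2 + 4 * B * C"
    unfolding disc_def by (simp add: algebra_simps)
  also have "\<dots> = (A + D)^2 - 4"
    using ABCD(1) by (simp add: power2_eq_square algebra_simps)
  finally have disc: "disc (C, D - A, - B) = (A + D)^2 - 4" .
  have "9 \<le> (A + D)^2"
    using ABCD power_mono[of 3 "A + D" 2] by simp
  then show "(C, D - A, - B) \<in> Qplus"
    unfolding Qplus_def using disc square_minus_4_not_square[of "A + D"] ABCD by auto
qed

lemma cf_eval_wQ_cf_mat:
  assumes cs: "\<forall>c\<in>set cs. 1 \<le> c" "even (length cs)" "cs \<noteq> []" and m: "cf_mat cs = (A, B, C, D)"
  shows "0 < wQ (C, D - A, - B)" "cf_eval cs (wQ (C, D - A, - B)) = wQ (C, D - A, - B)"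
proof -
  note ABCD = cf_mat_even[OF cs m]
  define s where "s = sqrt (real_of_int (disc (C, D - A, - B)))"
  have "0 \<le> disc (C, D - A, - B)"
    using Qplus_cf_mat(1)[OF cs m] unfolding Qplus_def by simp
  then have "s^2 = real_of_int (disc (C, D - A, - B))"
    unfolding s_def by simp
  then have s2: "s^2 = real_of_int ((D - A)^2 + 4 * B * C)"
    unfolding Qplus_cf_mat(2)[OF cs m] .
  have s_gt: "\<bar>real_of_int (A - D)\<bar> < s"
  proof (rule power2_less_imp_less)
    show "\<bar>real_of_int (A - D)\<bar>^2 < s^2"
      using s2 ABCD by (simp add: power2_eq_square algebra_simps)
  qed (use \<open>0 \<le> disc (C, D - A, - B)\<close> in \<open>simp add: s_def\<close>)
  define x where "x = (real_of_int (A - D) + s) / (2 * real_of_int C)"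
  have wQ: "wQ (C, D - A, - B) = x"
    unfolding wQ_def x_def s_def by (simp add: algebra_simps)
  show "0 < wQ (C, D - A, - B)"
    unfolding wQ x_def using s_gt ABCD by (intro divide_pos_pos) auto
  have "4 * real_of_int C * (real_of_int C * x^2 + real_of_int (D - A) * x - real_of_int B)
      = s^2 - real_of_int (A - D)^2 - 4 * real_of_int B * real_of_int C"
    unfolding x_def using ABCD by (simp add: field_simps power2_eq_square)
  also have "\<dots> = 0"
    using s2 by (simp add: power2_eq_square algebra_simps)
  finally have "real_of_int C * x^2 + real_of_int (D - A) * x - real_of_int B = 0"
    using ABCD by simp
  then have "real_of_int A * x + real_of_int B = x * (real_of_int C * x + real_of_int D)"
    by (simp add: power2_eq_square algebra_simps)
  then show "cf_eval cs (wQ (C, D - A, - B)) = wQ (C, D - A, - B)"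
    using cf_eval_cf_mat[OF \<open>0 < wQ (C, D - A, - B)\<close> m] wQ by simp
qed

lemma Qplus_with_periodic_digits:
  assumes cs: "\<forall>c\<in>set cs. 1 \<le> c" "even (length cs)" "cs \<noteq> []"
  shows "\<exists>Q\<in>Qplus. \<forall>k. cf_digit (wQ Q) k = int (cs ! (k mod length cs))"
proof -
  obtain A B C D where m: "cf_mat cs = (A, B, C, D)"
    by (cases "cf_mat cs") auto
  then show ?thesis
    using Qplus_cf_mat(1)[OF cs m] cf_digit_fixed_point[OF cs(1,3) cf_eval_wQ_cf_mat[OF cs m]] by blast
qed

section \<open>Lagrange's theorem for \<open>w_Q\<close>\<close>

lemma cf_rem_Suc_gt_1:
  assumes "cf_rem w k \<notin> \<int>"
  shows "1 < cf_rem w (Suc k)"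
proof -
  have "0 < frac (cf_rem w k)" "frac (cf_rem w k) < 1"
    using assms frac_lt_1 by (auto simp: frac_gt_0_iff)
  then show ?thesis
    by (simp add: frac_def less_divide_eq)
qed

lemma cf_digit_Suc_ge_1: "cf_rem w k \<notin> \<int> \<Longrightarrow> 1 \<le> cf_digit w (Suc k)"
  using cf_rem_Suc_gt_1[of w k] unfolding cf_digit_def by linarith

lemma cf_conjugate_frac:
  fixes y :: "nat \<Rightarrow> real"
  assumes x_irr: "\<And>k. cf_rem w k \<notin> \<int>" and y_irr: "\<And>k. y k \<notin> \<int>"
    and y_Suc: "\<And>k. y (Suc k) = 1 / (y k - cf_digit w k)" and nonneg: "\<And>k. 0 \<le> y (Suc k)"
  shows "0 < y (Suc k) - cf_digit w (Suc k)" "y (Suc k) - cf_digit w (Suc k) < 1"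
proof -
  let ?a = "cf_digit w"
  have "\<not> y (Suc k) < ?a (Suc k)"
  proof
    assume "y (Suc k) < ?a (Suc k)"
    then have "y (Suc (Suc k)) < 0"
      using y_Suc[of "Suc k"] by (simp add: divide_less_0_iff)
    then show False
      using nonneg[of "Suc k"] by simp
  qed
  moreover have "\<not> ?a (Suc k) + 1 < y (Suc k)"
  proof
    assume "?a (Suc k) + 1 < y (Suc k)"
    then have "y (Suc (Suc k)) < 1"
      using y_Suc[of "Suc k"] by (simp add: divide_less_eq)
    then have "y (Suc (Suc (Suc k))) < 0"
      using y_Suc[of "Suc (Suc k)"] cf_digit_Suc_ge_1[OF x_irr, of "Suc k"]
      by (simp add: divide_less_0_iff)
    then show False
      using nonneg[of "Suc (Suc k)"] by simp
  qed
  moreover have "y (Suc k) \<noteq> of_int (?a (Suc k))" "y (Suc k) \<noteq> of_int (?a (Suc k) + 1)"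
    using y_irr[of "Suc k"] by (metis Ints_of_int)+
  ultimately show "0 < y (Suc k) - ?a (Suc k)" "y (Suc k) - ?a (Suc k) < 1"
    by auto
qed

lemma cf_conjugate_gap_grows:
  fixes y :: "nat \<Rightarrow> real"
  assumes "cf_rem w k \<notin> \<int>" and y_Suc: "y (Suc k) = 1 / (y k - cf_digit w k)"
    and "0 < y k - cf_digit w k" "y k - cf_digit w k < 1" "cf_rem w k \<noteq> y k"
  shows "\<bar>cf_rem w k - y k\<bar> < \<bar>cf_rem w (Suc k) - y (Suc k)\<bar>"
proof -
  define u where "u = cf_rem w k - cf_digit w k"
  define v where "v = y k - cf_digit w k"
  have uv: "0 < u" "u < 1" "0 < v" "v < 1"
    using assms(1,3,4) frac_lt_1[of "cf_rem w k"] unfolding u_def v_def cf_digit_def frac_def[symmetric]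
    by (auto simp: frac_gt_0_iff)
  have "u - v \<noteq> 0"
    using assms(5) unfolding u_def v_def by simp
  moreover have "u * v < 1"
    using uv mult_strict_mono[of u 1 v 1] by simp
  ultimately have "\<bar>u - v\<bar> < \<bar>u - v\<bar> / (u * v)"
    using uv by (simp add: less_divide_eq)
  moreover have "cf_rem w k - y k = u - v"
    unfolding u_def v_def by simp
  moreover have "cf_rem w (Suc k) = 1 / u"
    unfolding u_def cf_digit_def by (rule cf_rem.simps(2))
  moreover have "y (Suc k) = 1 / v"
    unfolding v_def by (rule y_Suc)
  moreover have "1 / u - 1 / v = (v - u) / (u * v)" "0 < u * v"
    using uv by (simp_all add: field_simps)
  ultimately show ?thesis
    by (simp add: abs_divide abs_minus_commute)
qed

lemma no_decreasing_abs_int: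
  fixes q :: "nat \<Rightarrow> int"
  assumes "\<And>k. \<bar>q (Suc k)\<bar> < \<bar>q k\<bar>"
  shows False
proof -
  have "\<bar>q j\<bar> + int j \<le> \<bar>q 0\<bar>" for j
  proof (induction j)
    case (Suc j)
    then show ?case
      using assms[of j] by simp
  qed simp
  from this[of "Suc (nat \<bar>q 0\<bar>)"] show False
    by simp
qed

text \<open>The conjugate \<open>y\<close> of the complete quotients of a quadratic irrationality follows the
 same digits. If it never became negative, the digits would force \<open>0 < y - a < 1\<close> at each
 step, which makes \<open>\<bar>x - y\<bar> = \<bar>c / q\<bar>\<close> strictly increasing and the integers \<open>\<bar>q\<bar>\<close> strictly
 decreasing.\<close>
lemma cf_conjugate_eventually_negative:
  fixes y :: "nat \<Rightarrow> real" and q :: "nat \<Rightarrow> int"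
  assumes x_irr: "\<And>k. cf_rem w k \<notin> \<int>" and y_irr: "\<And>k. y k \<notin> \<int>"
    and y_Suc: "\<And>k. y (Suc k) = 1 / (y k - cf_digit w k)"
    and diff: "\<And>k. cf_rem w k - y k = c / q k" and q: "\<And>k. q k \<noteq> 0" and "c \<noteq> 0"
  shows "\<exists>K. y (Suc K) < 0"
proof (rule ccontr)
  assume "\<not> (\<exists>K. y (Suc K) < 0)"
  then have "0 \<le> y (Suc k)" for k
    by (simp add: not_less)
  note frac = cf_conjugate_frac[OF x_irr y_irr y_Suc this]
  have "\<bar>q (Suc (Suc k))\<bar> < \<bar>q (Suc k)\<bar>" for k
  proof (rule ccontr)
    assume "\<not> \<bar>q (Suc (Suc k))\<bar> < \<bar>q (Suc k)\<bar>"
    then have "\<bar>real_of_int (q (Suc k))\<bar> \<le> \<bar>real_of_int (q (Suc (Suc k)))\<bar>"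
      by linarith
    then have "\<bar>c\<bar> / \<bar>q (Suc (Suc k))\<bar> \<le> \<bar>c\<bar> / \<bar>q (Suc k)\<bar>"
      using q by (intro divide_left_mono) auto
    moreover have "cf_rem w (Suc k) \<noteq> y (Suc k)"
      using diff[of "Suc k"] q \<open>c \<noteq> 0\<close> by auto
    then have "\<bar>c / q (Suc k)\<bar> < \<bar>c / q (Suc (Suc k))\<bar>"
      using cf_conjugate_gap_grows[OF x_irr y_Suc frac] unfolding diff by blast
    ultimately show False
      by (simp add: abs_divide)
  qed
  then show False
    using no_decreasing_abs_int[of "\<lambda>k. q (Suc k)"] by blast
qed

lemma cf_conjugate_reduced:
  fixes y :: "nat \<Rightarrow> real"
  assumes "\<And>k. cf_rem w k \<notin> \<int>" "\<And>k. y (Suc k) = 1 / (y k - cf_digit w k)" "y (Suc K) < 0"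
  shows "-1 < y (Suc (Suc K) + j) \<and> y (Suc (Suc K) + j) < 0"
proof (induction j)
  have "(1::real) \<le> of_int (cf_digit w (Suc K))"
    using assms(1) cf_digit_Suc_ge_1 by simp
  then have "y (Suc K) - cf_digit w (Suc K) < -1"
    using assms(3) by linarith
  then show "-1 < y (Suc (Suc K) + 0) \<and> y (Suc (Suc K) + 0) < 0"
    using assms(2)[of "Suc K"] by (simp add: divide_less_0_iff less_divide_eq)
next
  case (Suc j)
  have "(1::real) \<le> of_int (cf_digit w (Suc (Suc K + j)))"
    using cf_digit_Suc_ge_1[OF assms(1)] by simp
  then have "y (Suc (Suc K) + j) - cf_digit w (Suc (Suc K) + j) < -1"
    using Suc by simp
  then show ?case
    using assms(2)[of "Suc (Suc K) + j"] by (simp add: divide_less_0_iff less_divide_eq)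
qed

lemma eventually_periodic_iterates:
  assumes step: "\<And>k. x (Suc k) = F (x k)" and S: "finite S" "\<And>k. K \<le> k \<Longrightarrow> x k \<in> S"
  shows "\<exists>p>0. \<exists>N. \<forall>k\<ge>N. x (k + p) = x k"
proof -
  have "x ` {K..K + card S} \<subseteq> S"
    using S(2) by auto
  then have "\<not> inj_on x {K..K + card S}"
    using card_inj_on_le[of x "{K..K + card S}" S] S(1) by auto
  then obtain a b where "a \<noteq> b" "x a = x b"
    unfolding inj_on_def by auto
  obtain m n where mn: "m < n" "x m = x n"
  proof (cases "a < b")
    case False
    then have "b < a"
      using \<open>a \<noteq> b\<close> by simp
    then show thesis
      using that[of b a] \<open>x a = x b\<close> by simp
  qed (use that \<open>x a = x b\<close> in blast)
  have shift: "x (m + j) = x (n + j)" for j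
    by (induction j) (simp_all add: mn step)
  have "\<forall>k\<ge>m. x (k + (n - m)) = x k"
  proof (intro allI impI)
    fix k assume "m \<le> k"
    then obtain j where "k = m + j"
      using le_Suc_ex by blast
    then show "x (k + (n - m)) = x k"
      using shift[of j] mn(1) by (simp add: add.commute)
  qed
  then show ?thesis
    using mn(1) by (intro exI[of _ "n - m"]) auto
qed

text \<open>\<open>cf_pq w D P q k = (P', q')\<close> describes the \<open>k\<close>-th complete quotient
 \<open>(P' + sqrt D) / q'\<close> of \<open>w = (P + sqrt D) / q\<close>.\<close>
fun cf_pq :: "real \<Rightarrow> int \<Rightarrow> int \<Rightarrow> int \<Rightarrow> nat \<Rightarrow> int \<times> int" where
  "cf_pq w D P q 0 = (P, q)"
| "cf_pq w D P q (Suc k) = (case cf_pq w D P q k of (P', q') \<Rightarrow>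
      (cf_digit w k * q' - P', (D - (cf_digit w k * q' - P')^2) div q'))"

lemma quadratic_surd_step_dvd:
  fixes D P q a :: int
  assumes "q dvd D - P^2"
  shows "q dvd D - (a * q - P)^2"
proof -
  have "D - (a * q - P)^2 = (D - P^2) + q * (2 * a * P - a^2 * q)"
    by (simp add: power2_eq_square algebra_simps)
  then show ?thesis
    using assms by (simp only:) (intro dvd_add dvd_triv_left)
qed

lemma quadratic_surd_step:
  fixes D P q q' P' a :: int and t :: real
  assumes t: "t^2 = of_int D" "t \<notin> \<int>" and q: "q \<noteq> 0" "q * q' = D - P'^2" and P': "P' = a * q - P"
  shows "1 / ((P + t) / q - a) = (P' + t) / q'"
proof -
  have "t \<noteq> of_int P'" "t \<noteq> of_int (- P')"
    using t(2) by auto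
  then have "t - P' \<noteq> 0" "t + P' \<noteq> 0"
    by auto
  have qq: "real_of_int q * real_of_int q' = (t - P') * (t + P')"
    using arg_cong[OF q(2), of real_of_int] t(1) by (simp add: power2_eq_square algebra_simps)
  then have "q' \<noteq> 0"
    using \<open>t - P' \<noteq> 0\<close> \<open>t + P' \<noteq> 0\<close> by auto
  have "(P + t) / q - a = (t - P') / q"
    using q(1) unfolding P' by (simp add: field_simps)
  then have "1 / ((P + t) / q - a) = q / (t - P')"
    by simp
  also have "\<dots> = (P' + t) / q'"
    using qq \<open>q' \<noteq> 0\<close> \<open>t - P' \<noteq> 0\<close> by (simp add: field_simps)
  finally show ?thesis .
qed

lemma quadratic_surd_not_Int:
  fixes t :: real and P q :: int
  assumes "t \<notin> \<int>" "q \<noteq> 0"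
  shows "(P + t) / q \<notin> \<int>"
proof
  assume "(P + t) / q \<in> \<int>"
  then obtain z where "(P + t) / q = of_int z"
    by (auto elim: Ints_cases)
  then have "t = of_int (z * q - P)"
    using assms(2) by (simp add: field_simps)
  then show False
    using assms(1) by simp
qed

lemma sqrt_disc_Qplus:
  assumes "Q \<in> Qplus"
  shows "0 < sqrt (disc Q)" "sqrt (disc Q) ^ 2 = disc Q" "sqrt (disc Q) \<notin> \<int>"
proof -
  show "0 < sqrt (disc Q)" "sqrt (disc Q) ^ 2 = disc Q"
    using assms unfolding Qplus_def by simp_all
  show "sqrt (disc Q) \<notin> \<int>"
  proof
    assume "sqrt (disc Q) \<in> \<int>"
    then obtain m where "sqrt (disc Q) = of_int m"
      by (auto elim: Ints_cases)
    then have "disc Q = m^2"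
      using \<open>sqrt (disc Q) ^ 2 = disc Q\<close> by (metis of_int_eq_iff of_int_power)
    then show False
      using assms unfolding Qplus_def by blast
  qed
qed

lemma cf_pq_invariant:
  fixes D P0 q0 :: int and s :: real
  assumes D: "\<And>k. D \<noteq> k^2" "s^2 = of_int D" "s \<notin> \<int>"
    and q0: "q0 \<noteq> 0" "q0 dvd D - P0^2" and w: "w = (P0 + s) / q0"
  defines "P \<equiv> \<lambda>k. fst (cf_pq w D P0 q0 k)" and "q \<equiv> \<lambda>k. snd (cf_pq w D P0 q0 k)"
  shows "q k \<noteq> 0" "cf_rem w k = (P k + s) / q k"
    "(P (Suc k) - s) / q (Suc k) = 1 / ((P k - s) / q k - cf_digit w k)"
proof -
  have P_Suc: "P (Suc k) = cf_digit w k * q k - P k"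
    and q_Suc: "q (Suc k) = (D - P (Suc k)^2) div q k" for k
    unfolding P_def q_def by (cases "cf_pq w D P0 q0 k"; simp)+
  have step: "q k * q (Suc k) = D - P (Suc k)^2" if "q k dvd D - P k^2" for k
    using quadratic_surd_step_dvd[OF that] P_Suc q_Suc by simp
  have inv: "q k \<noteq> 0 \<and> q k dvd D - P k^2 \<and> cf_rem w k = (P k + s) / q k" for k
  proof (induction k)
    case 0
    then show ?case
      using q0 w unfolding P_def q_def by simp
  next
    case (Suc k)
    then have qq: "q k * q (Suc k) = D - P (Suc k)^2"
      using step by blast
    then have "q (Suc k) \<noteq> 0"
      using D(1)[of "P (Suc k)"] by auto
    moreover have "cf_rem w (Suc k) = (P (Suc k) + s) / q (Suc k)"
      using quadratic_surd_step[OF D(2,3) _ qq P_Suc] Suc by (simp add: cf_digit_def)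
    ultimately show ?case
      using qq by (metis dvd_triv_right)
  qed
  then show "q k \<noteq> 0" "cf_rem w k = (P k + s) / q k"
    by simp_all
  have "- s \<notin> \<int>"
    using D(3) by (metis minus_in_Ints_iff)
  then show "(P (Suc k) - s) / q (Suc k) = 1 / ((P k - s) / q k - cf_digit w k)"
    using quadratic_surd_step[of "- s" D "q k", OF _ _ _ step P_Suc] inv[of k] D(2) by simp
qed

lemma cf_rem_wQ_quadratic:
  assumes "Q \<in> Qplus"
  obtains P q :: "nat \<Rightarrow> int" where "\<And>k. q k \<noteq> 0"
    "\<And>k. cf_rem (wQ Q) k = (P k + sqrt (disc Q)) / q k"
    "\<And>k. (P (Suc k) - sqrt (disc Q)) / q (Suc k) = 1 / ((P k - sqrt (disc Q)) / q k - cf_digit (wQ Q) k)"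
proof -
  obtain a b c where Q: "Q = (a, b, c)"
    by (cases Q) auto
  have nonsquare: "disc Q \<noteq> k^2" for k
    using assms unfolding Qplus_def by auto
  have q0: "2 * a \<noteq> 0"
  proof
    assume "2 * a = 0"
    then have "disc Q = b^2"
      using Q unfolding disc_def by simp
    then show False
      using nonsquare by blast
  qed
  have dvd: "2 * a dvd disc Q - (- b)^2"
    using Q unfolding disc_def by simp
  have w: "wQ Q = (real_of_int (- b) + sqrt (disc Q)) / real_of_int (2 * a)"
    unfolding wQ_def Q by simp
  show thesis
    by (rule that[OF cf_pq_invariant[OF nonsquare sqrt_disc_Qplus(2,3)[OF assms] q0 dvd w]])
qed

lemma cf_rem_wQ_not_Int:
  assumes "Q \<in> Qplus"
  shows "cf_rem (wQ Q) k \<notin> \<int>"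
proof -
  obtain P q :: "nat \<Rightarrow> int" where "\<And>k. q k \<noteq> 0" "\<And>k. cf_rem (wQ Q) k = (P k + sqrt (disc Q)) / q k"
    "\<And>k. (P (Suc k) - sqrt (disc Q)) / q (Suc k) = 1 / ((P k - sqrt (disc Q)) / q k - cf_digit (wQ Q) k)"
    using cf_rem_wQ_quadratic[OF assms] by metis
  then show ?thesis
    using quadratic_surd_not_Int sqrt_disc_Qplus(3)[OF assms] by simp
qed

lemma reduced_surd_bounds:
  fixes s :: real and P q :: int
  assumes "0 < s" "q \<noteq> 0" "1 < (P + s) / q" "-1 < (P - s) / q" "(P - s) / q < 0"
  shows "0 < P \<and> P < s \<and> 0 < q \<and> real_of_int q < 2 * s"
proof -
  have diff: "(P + s) / q - (P - s) / q = 2 * s / q"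
    using assms(2) by (simp add: field_simps)
  have sum: "(P + s) / q + (P - s) / q = 2 * P / q"
    using assms(2) by (simp add: field_simps)
  have "0 < 2 * s / q"
    using diff assms(3,5) by linarith
  then have "0 < q"
    using assms(1) by (simp add: zero_less_divide_iff)
  moreover have "0 < 2 * P / q"
    using sum assms by linarith
  moreover have "1 < 2 * s / q"
    using diff assms by linarith
  ultimately show ?thesis
    using assms(5) by (simp add: zero_less_divide_iff divide_less_0_iff less_divide_eq)
qed

lemma cf_rem_wQ_eventually_reduced:
  assumes "Q \<in> Qplus"
  obtains P q :: "nat \<Rightarrow> int" and K where "\<And>k. cf_rem (wQ Q) k = (P k + sqrt (disc Q)) / q k"
    "\<And>k. K \<le> k \<Longrightarrow> 0 < P k \<and> P k < sqrt (disc Q) \<and> 0 < q k \<and> q k < 2 * sqrt (disc Q)"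
proof -
  define s where "s = sqrt (disc Q)"
  define w where "w = wQ Q"
  obtain P q :: "nat \<Rightarrow> int" where q: "\<And>k. q k \<noteq> 0" and x: "\<And>k. cf_rem w k = (P k + s) / q k"
    and y: "\<And>k. (P (Suc k) - s) / q (Suc k) = 1 / ((P k - s) / q k - cf_digit w k)"
    using cf_rem_wQ_quadratic[OF assms] unfolding s_def w_def by metis
  have s: "0 < s" "- s \<notin> \<int>"
    using sqrt_disc_Qplus[OF assms] unfolding s_def by auto
  have x_irr: "cf_rem w k \<notin> \<int>" for k
    unfolding w_def by (rule cf_rem_wQ_not_Int[OF assms])
  let ?y = "\<lambda>k. (P k - s) / q k"
  have y_irr: "?y k \<notin> \<int>" for k
    using quadratic_surd_not_Int[OF s(2) q] by simp
  have diff: "cf_rem w k - ?y k = (2 * s) / q k" for k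
    using x[of k] q[of k] by (simp add: field_simps)
  have "\<exists>K. ?y (Suc K) < 0"
    using cf_conjugate_eventually_negative[where y = ?y and c = "2 * s" and q = q, OF x_irr y_irr y diff q] s(1)
    by simp
  then obtain K where "?y (Suc K) < 0" ..
  have "0 < P k \<and> P k < s \<and> 0 < q k \<and> q k < 2 * s" if k: "Suc (Suc K) \<le> k" for k
  proof -
    obtain j where j: "k = Suc (Suc K) + j"
      using le_Suc_ex[OF k] by blast
    have "1 < cf_rem w (Suc (Suc K + j))"
      by (rule cf_rem_Suc_gt_1[OF x_irr])
    then have "1 < (P k + s) / q k"
      using x[of k] j by (simp del: cf_rem.simps)
    moreover have "-1 < ?y k \<and> ?y k < 0"
      using cf_conjugate_reduced[where y = ?y, OF x_irr y \<open>?y (Suc K) < 0\<close>, of j] j by simp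
    ultimately show ?thesis
      by (intro reduced_surd_bounds[OF s(1) q]) auto
  qed
  then show thesis
    using that[of P q "Suc (Suc K)"] x unfolding s_def w_def by blast
qed

lemma cf_digit_wQ_eventually_periodic:
  assumes "Q \<in> Qplus"
  shows "\<exists>p. eventual_period (cf_digit (wQ Q)) p"
proof -
  define s where "s = sqrt (disc Q)"
  obtain P q :: "nat \<Rightarrow> int" and K where x: "\<And>k. cf_rem (wQ Q) k = (P k + s) / q k"
    and bounds: "\<And>k. K \<le> k \<Longrightarrow> 0 < P k \<and> P k < s \<and> 0 < q k \<and> q k < 2 * s"
    using cf_rem_wQ_eventually_reduced[OF assms] unfolding s_def by metis
  have "(1::real) \<le> disc Q"
    using assms unfolding Qplus_def by simp
  then have "s \<le> disc Q"
    unfolding s_def by (intro real_le_lsqrt) (simp_all add: power2_eq_square)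
  define S where "S = (\<lambda>(P, q). (of_int P + s) / of_int q) ` ({0..disc Q} \<times> {0..2 * disc Q})"
  have "cf_rem (wQ Q) k \<in> S" if "K \<le> k" for k
  proof -
    have "real_of_int (P k) < real_of_int (disc Q)" "real_of_int (q k) < real_of_int (2 * disc Q)"
      using bounds[OF that] \<open>s \<le> disc Q\<close> by simp_all
    then have "(P k, q k) \<in> {0..disc Q} \<times> {0..2 * disc Q}"
      using bounds[OF that] unfolding of_int_less_iff by simp
    then show ?thesis
      unfolding S_def using x[of k] by (auto intro!: image_eqI[of _ _ "(P k, q k)"])
  qed
  moreover have "finite S"
    unfolding S_def by simp
  ultimately obtain p N where "0 < p" "\<forall>k\<ge>N. cf_rem (wQ Q) (k + p) = cf_rem (wQ Q) k"
    using eventually_periodic_iterates[of "cf_rem (wQ Q)" "\<lambda>x. 1 / (x - \<lfloor>x\<rfloor>)" S K] by auto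
  then have "eventual_period (cf_digit (wQ Q)) p"
    unfolding eventual_period_def cf_digit_def by (auto intro!: exI[of _ N])
  then show ?thesis ..
qed

lemma primitive_WQ:
  assumes "Q \<in> Qplus"
  shows "primitive_word (WQ Q)" "2 \<le> length (WQ Q)"
proof -
  obtain p where "eventual_period (cf_digit (wQ Q)) p"
    using cf_digit_wQ_eventually_periodic[OF assms] ..
  moreover have "1 \<le> cf_digit (wQ Q) k" if "1 \<le> k" for k
    using that cf_digit_Suc_ge_1[OF cf_rem_wQ_not_Int[OF assms]] by (cases k) auto
  ultimately show "primitive_word (WQ Q)" "2 \<le> length (WQ Q)"
    unfolding WQ_eq_runs_word using primitive_runs_word_even_period_block by blast+
qed

lemma word_braid_WQ: "Q \<in> Qplus \<Longrightarrow> word_braid (WQ Q) = form_braid Q"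
  using word_braid_eq_orbit_braid[OF primitive_WQ] form_braid_eq_orbit_braid by simp

lemma word_braid_rotate: "word_braid (rotate k W) = word_braid W"
proof -
  have "rk (rotate k W) = rk W"
    unfolding rk_def by simp
  moreover have "rot_at (rotate k W) = rot_at W"
    unfolding rot_at_def using calculation by simp
  ultimately show ?thesis
    unfolding word_braid_def by simp
qed

lemma rotate_starting_L_ending_R:
  assumes "L \<in> set W" "R \<in> set W"
  shows "\<exists>k. hd (rotate k W) = L \<and> last (rotate k W) = R"
proof -
  obtain j where j: "j < length W" "W ! j = R"
    using assms(2) unfolding in_set_conv_nth by blast
  then have "hd (rotate j W) = W ! (j mod length W)"
    by (intro hd_rotate_conv_nth) auto
  then have hd_R: "hd (rotate j W) = R"
    using j by simp
  have "L \<in> set (rotate j W)"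
    using assms(1) by simp
  then obtain xs ys where split: "rotate j W = xs @ L # ys" "L \<notin> set xs"
    using split_list_first[of L "rotate j W"] by blast
  then have "xs \<noteq> []"
    using hd_R by (cases xs) auto
  then have "last xs \<in> set xs"
    by simp
  then have "last xs \<noteq> L"
    using split(2) by auto
  then have "last xs = R"
    by (cases "last xs") simp_all
  have "rotate (length xs + j) W = rotate (length xs) (rotate j W)"
    by (simp add: rotate_rotate)
  also have "\<dots> = (L # ys) @ xs"
    unfolding split(1) by (rule rotate_append)
  finally show ?thesis
    using \<open>xs \<noteq> []\<close> \<open>last xs = R\<close> by (intro exI[of _ "length xs + j"]) simp
qed

lemma exists_WQ_rotation:
  assumes "primitive_word W" "2 \<le> length W"
  shows "\<exists>Q\<in>Qplus. \<exists>k. WQ Q = rotate k W"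
proof -
  obtain k where k: "hd (rotate k W) = L" "last (rotate k W) = R"
    using rotate_starting_L_ending_R primitive_word_letters[OF assms] by blast
  define V where "V = rotate k W"
  have "V \<noteq> []"
    using assms(2) V_def by auto
  obtain cs where cs: "V = runs_word True cs" "\<forall>c\<in>set cs. 1 \<le> c"
    using runs_word_exists[of V True] k V_def by (auto simp: block_letter_def)
  then have "cs \<noteq> []"
    using \<open>V \<noteq> []\<close> by auto
  then have "even (length cs)"
    using last_runs_word[OF _ cs(2), of True] k cs(1) V_def by (auto simp: block_letter_def split: if_splits)
  obtain Q where "Q \<in> Qplus" and digits: "\<And>k. cf_digit (wQ Q) k = int (cs ! (k mod length cs))"
    using Qplus_with_periodic_digits[OF cs(2) \<open>even (length cs)\<close> \<open>cs \<noteq> []\<close>] by blast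
  have "primitive_word V"
    unfolding V_def primitive_word_rotate by (rule assms(1))
  then have "primitive_word (runs_word True cs)"
    using cs(1) by simp
  then have "WQ Q = V"
    unfolding WQ_eq_runs_word using even_period_block_periodic[OF cs(2) \<open>even (length cs)\<close> \<open>cs \<noteq> []\<close> _ digits] cs(1)
    by simp
  then show ?thesis
    using \<open>Q \<in> Qplus\<close> V_def by blast
qed

theorem proposition2p14:
  shows "(\<forall>Q \<in> Qplus. word_braid (WQ Q) = form_braid Q)
       \<and> (\<forall>W. primitive_word W \<and> W \<noteq> [L] \<and> W \<noteq> [R] \<longrightarrow>
              (\<exists>Q \<in> Qplus. word_braid W = form_braid Q))"
proof (intro conjI ballI allI impI)
  show "word_braid (WQ Q) = form_braid Q" if "Q \<in> Qplus" for Q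
    using that by (rule word_braid_WQ)
next
  fix W assume "primitive_word W \<and> W \<noteq> [L] \<and> W \<noteq> [R]"
  then obtain Q k where Q: "Q \<in> Qplus" "WQ Q = rotate k W"
    using exists_WQ_rotation primitive_word_length_ge_2 by blast
  have "word_braid W = word_braid (rotate k W)"
    by (rule word_braid_rotate[symmetric])
  also have "\<dots> = form_braid Q"
    using word_braid_WQ[OF Q(1)] Q(2) by simp
  finally show "\<exists>Q \<in> Qplus. word_braid W = form_braid Q"
    using Q(1) by blast
qed

end
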